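(* Let $p\ge 2$ and $\varphi\in\mathbb{C}^{p-1}\setminus\Omega_1$. Then the Lie algebra $\operatorname{Der}(F_\varphi)$ is solvable of derived length $3$ and is complete, i.e. it has trivial center and every derivation of it is inner. Moreover, for any $\varphi,\varphi'\in\mathbb{C}^{p-1}\setminus\Omega_1$ one has $\operatorname{Der}(F_\varphi)\cong\operatorname{Der}(F_{\varphi'})$.
   Context: Let $p\ge 2$ and $\varphi=(\varphi_1,\dots,\varphi_{p-1})\in\mathbb{C}^{p-1}$. $F_\varphi$ denotes the $2p$-dimensional complex Lie algebra with basis $X_1,\dots,X_{2p}$ whose nonzero brackets (up to antisymmetry) are $[X_1,X_2]=X_1$, $[X_2,X_{2k+1}]=\varphi_kX_{2k+1}$, $[X_2,X_{2k+2}]=-(1+\varphi_k)X_{2k+2}$, $[X_{2k+1},X_{2k+2}]=X_1$ for $1\le k\le p-1$. $\Omega_1\subset\mathbb{C}^{p-1}$ is the union of the hyperplanes $\{1+\varphi_i+\varphi_j=0\}$, $\{2+\varphi_i+\varphi_j=0\}$ ($1\le i,j\le p-1$), $\{\varphi_i-\varphi_j=0\}$ ($1\le i\ne j\le p-1$), $\{\varphi_i=0\}$, $\{\varphi_i+1=0\}$, $\{2\varphi_i+1=0\}$ ($1\le i\le p-1$). $\operatorname{Der}(\mathfrak g)$ is the Lie algebra of derivations of $\mathfrak g$ with the commutator bracket. *)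

theory Defs
  imports Complex_Main "HOL-Library.Function_Algebras"
begin

text \<open>A complex Lie algebra is presented by a carrier set L inside an additive group 'a,
  a bracket br and a complex scalar multiplication sc.\<close>

definition cspan :: "(complex \<Rightarrow> 'a::ab_group_add \<Rightarrow> 'a) \<Rightarrow> 'a set \<Rightarrow> 'a set" where
  "cspan sc S = {x. \<exists>(n::nat) c v. (\<forall>i<n. v i \<in> S) \<and> x = (\<Sum>i<n. sc (c i) (v i))}"

fun derived_series ::
  "'a::ab_group_add set \<Rightarrow> ('a \<Rightarrow> 'a \<Rightarrow> 'a) \<Rightarrow> (complex \<Rightarrow> 'a \<Rightarrow> 'a) \<Rightarrow> nat \<Rightarrow> 'a set" where
  "derived_series L br sc 0 = L"
| "derived_series L br sc (Suc k) =
     cspan sc {br x y | x y. x \<in> derived_series L br sc k \<and> y \<in> derived_series L br sc k}"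

text \<open>Solvable of derived length exactly k (k \<ge> 1).\<close>
definition has_derived_length ::
  "'a::ab_group_add set \<Rightarrow> ('a \<Rightarrow> 'a \<Rightarrow> 'a) \<Rightarrow> (complex \<Rightarrow> 'a \<Rightarrow> 'a) \<Rightarrow> nat \<Rightarrow> bool" where
  "has_derived_length L br sc k \<longleftrightarrow>
     derived_series L br sc k = {0} \<and> derived_series L br sc (k - 1) \<noteq> {0}"

definition lie_center :: "'a::ab_group_add set \<Rightarrow> ('a \<Rightarrow> 'a \<Rightarrow> 'a) \<Rightarrow> 'a set" where
  "lie_center L br = {z \<in> L. \<forall>x\<in>L. br z x = 0}"

text \<open>Derivations of (L, br), represented extensionally (value 0 outside L).\<close>
definition derivations ::
  "'a::ab_group_add set \<Rightarrow> ('a \<Rightarrow> 'a \<Rightarrow> 'a) \<Rightarrow> (complex \<Rightarrow> 'a \<Rightarrow> 'a) \<Rightarrow> ('a \<Rightarrow> 'a) set" where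
  "derivations L br sc = {d.
      (\<forall>x\<in>L. d x \<in> L)
    \<and> (\<forall>x\<in>L. \<forall>y\<in>L. d (x + y) = d x + d y)
    \<and> (\<forall>c. \<forall>x\<in>L. d (sc c x) = sc c (d x))
    \<and> (\<forall>x\<in>L. \<forall>y\<in>L. d (br x y) = br (d x) y + br x (d y))
    \<and> (\<forall>x. x \<notin> L \<longrightarrow> d x = 0)}"

definition inner_derivation :: "'a::ab_group_add set \<Rightarrow> ('a \<Rightarrow> 'a \<Rightarrow> 'a) \<Rightarrow> 'a \<Rightarrow> ('a \<Rightarrow> 'a)" where
  "inner_derivation L br a = (\<lambda>x. if x \<in> L then br a x else 0)"

definition complete_lie ::
  "'a::ab_group_add set \<Rightarrow> ('a \<Rightarrow> 'a \<Rightarrow> 'a) \<Rightarrow> (complex \<Rightarrow> 'a \<Rightarrow> 'a) \<Rightarrow> bool" where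
  "complete_lie L br sc \<longleftrightarrow>
     lie_center L br = {0} \<and>
     (\<forall>d\<in>derivations L br sc. \<exists>a\<in>L. d = inner_derivation L br a)"

definition lie_isomorphic ::
  "'a::ab_group_add set \<Rightarrow> ('a \<Rightarrow> 'a \<Rightarrow> 'a) \<Rightarrow> (complex \<Rightarrow> 'a \<Rightarrow> 'a) \<Rightarrow>
   'b::ab_group_add set \<Rightarrow> ('b \<Rightarrow> 'b \<Rightarrow> 'b) \<Rightarrow> (complex \<Rightarrow> 'b \<Rightarrow> 'b) \<Rightarrow> bool" where
  "lie_isomorphic L1 br1 sc1 L2 br2 sc2 \<longleftrightarrow>
     (\<exists>f. bij_betw f L1 L2
        \<and> (\<forall>x\<in>L1. \<forall>y\<in>L1. f (x + y) = f x + f y)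
        \<and> (\<forall>c. \<forall>x\<in>L1. f (sc1 c x) = sc2 c (f x))
        \<and> (\<forall>x\<in>L1. \<forall>y\<in>L1. f (br1 x y) = br2 (f x) (f y)))"

definition comm_bracket :: "('a::ab_group_add \<Rightarrow> 'a) \<Rightarrow> ('a \<Rightarrow> 'a) \<Rightarrow> ('a \<Rightarrow> 'a)" where
  "comm_bracket d e = (\<lambda>x. d (e x) - e (d x))"

definition fun_sc :: "(complex \<Rightarrow> 'a \<Rightarrow> 'a) \<Rightarrow> complex \<Rightarrow> ('a \<Rightarrow> 'a) \<Rightarrow> ('a \<Rightarrow> 'a)" where
  "fun_sc sc c d = (\<lambda>x. sc c (d x))"

text \<open>Vectors of C^(2p) are functions nat => complex supported on {1..2p};
  X_i is the i-th unit vector. phi k is meaningful for 1 <= k <= p-1.\<close>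

definition vsc :: "complex \<Rightarrow> (nat \<Rightarrow> complex) \<Rightarrow> (nat \<Rightarrow> complex)" where
  "vsc c v = (\<lambda>i. c * v i)"

definition Fcarrier :: "nat \<Rightarrow> (nat \<Rightarrow> complex) set" where
  "Fcarrier p = {x. \<forall>i. i \<notin> {1..2*p} \<longrightarrow> x i = 0}"

definition unitv :: "nat \<Rightarrow> nat \<Rightarrow> complex" where
  "unitv k = (\<lambda>i. if i = k then 1 else 0)"

text \<open>[X_i, X_j] for i < j.\<close>
definition Fupper :: "nat \<Rightarrow> (nat \<Rightarrow> complex) \<Rightarrow> nat \<Rightarrow> nat \<Rightarrow> (nat \<Rightarrow> complex)" where
  "Fupper p \<phi> i j =
     (if i = 1 \<and> j = 2 then unitv 1
      else if i = 2 \<and> (\<exists>k\<in>{1..p-1}. j = 2*k+1) then vsc (\<phi> ((j - 1) div 2)) (unitv j)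
      else if i = 2 \<and> (\<exists>k\<in>{1..p-1}. j = 2*k+2) then vsc (- (1 + \<phi> ((j - 2) div 2))) (unitv j)
      else if (\<exists>k\<in>{1..p-1}. i = 2*k+1 \<and> j = 2*k+2) then unitv 1
      else 0)"

definition Fbasis_bracket :: "nat \<Rightarrow> (nat \<Rightarrow> complex) \<Rightarrow> nat \<Rightarrow> nat \<Rightarrow> (nat \<Rightarrow> complex)" where
  "Fbasis_bracket p \<phi> i j =
     (if i < j then Fupper p \<phi> i j else if j < i then - Fupper p \<phi> j i else 0)"

definition Fbracket :: "nat \<Rightarrow> (nat \<Rightarrow> complex) \<Rightarrow> (nat \<Rightarrow> complex) \<Rightarrow> (nat \<Rightarrow> complex) \<Rightarrow> (nat \<Rightarrow> complex)" where
  "Fbracket p \<phi> x y =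
     (\<lambda>m. \<Sum>i\<in>{1..2*p}. \<Sum>j\<in>{1..2*p}. x i * y j * Fbasis_bracket p \<phi> i j m)"

definition in_Omega1 :: "nat \<Rightarrow> (nat \<Rightarrow> complex) \<Rightarrow> bool" where
  "in_Omega1 p \<phi> \<longleftrightarrow>
     (\<exists>i\<in>{1..p-1}. \<exists>j\<in>{1..p-1}. 1 + \<phi> i + \<phi> j = 0 \<or> 2 + \<phi> i + \<phi> j = 0)
   \<or> (\<exists>i\<in>{1..p-1}. \<exists>j\<in>{1..p-1}. i \<noteq> j \<and> \<phi> i = \<phi> j)
   \<or> (\<exists>i\<in>{1..p-1}. \<phi> i = 0 \<or> \<phi> i + 1 = 0 \<or> 2 * \<phi> i + 1 = 0)"

definition DerF :: "nat \<Rightarrow> (nat \<Rightarrow> complex) \<Rightarrow> ((nat \<Rightarrow> complex) \<Rightarrow> (nat \<Rightarrow> complex)) set" where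
  "DerF p \<phi> = derivations (Fcarrier p) (Fbracket p \<phi>) vsc"

end

theory Submission
  imports Defs
begin

text \<open>
  For phi outside Omega_1 the eigenvalues -1, 0, phi_k, -(1 + phi_k) of ad X_2 on the basis are
  separated enough that applying a derivation D to [X_j, X_2] = -w_j X_j forces D X_j into the span
  of X_1 and X_j. Hence every derivation is determined by 3p - 1 coefficients
  (a, alpha, b_k, d_k, e_k), and the coefficients of the commutator of two derivations are given by
  a formula in which phi does not occur. This yields the isomorphism between Der(F_phi) and
  Der(F_phi') and turns everything else into computations with coefficients: the derived series is
  {a = b = 0}, then the line of alpha, then 0; a central element commutes with three explicit
  elements and therefore vanishes; and a derivation Delta of Der(F_phi) equals ad A, where the
  coefficients of A are read off by applying the Leibniz rule for Delta to the bracket relations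
  between basis elements.
\<close>

section \<open>The bracket of F_phi in coordinates\<close>

lemma F_index_cases:
  fixes n p :: nat
  assumes "n \<in> {1..2*p}"
  obtains "n = 1" | "n = 2"
    | k where "k \<in> {1..p-1}" "n = 2*k+1"
    | k where "k \<in> {1..p-1}" "n = 2*k+2"
proof -
  consider "n = 1" | "n = 2" | "n \<ge> 3" "odd n" | "n \<ge> 3" "even n"
    using assms by force
  then show ?thesis
  proof cases
    case 3
    then obtain k where "n = 2*k+1" by (metis oddE)
    with 3 assms show ?thesis using that(3)[of k] by auto
  next
    case 4
    then obtain k where "n = 2*k" by (metis evenE)
    with 4 assms show ?thesis using that(4)[of "k - 1"] by auto
  qed (use that in auto)
qed

lemma index_arith_simps[simp]:
  fixes a b :: nat
  shows "2*a+2 \<noteq> 2*b+1" "2*a+1 \<noteq> 2*b+2" "(2*a+1 = 2*b+1) = (a = b)" "(2*a+2 = 2*b+2) = (a = b)"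
    "2*a+1 \<noteq> 2" "2*a+2 \<noteq> 1" "(2*a+1 = 1) = (a = 0)" "(2*a+2 = 2) = (a = 0)"
    "Suc (2*a) \<noteq> 2*b" "2*a \<noteq> Suc (2*b)" "Suc (2*a) \<noteq> 2" "2 \<noteq> Suc (2*a)"
  by presburger+

definition F_br :: "nat \<Rightarrow> (nat \<Rightarrow> complex) \<Rightarrow> (nat \<Rightarrow> complex) \<Rightarrow> (nat \<Rightarrow> complex) \<Rightarrow> nat \<Rightarrow> complex" where
  "F_br p \<phi> x y = (\<lambda>m.
     if m = 1 then x 1 * y 2 - x 2 * y 1 + (\<Sum>k\<in>{1..p-1}. x (2*k+1) * y (2*k+2) - x (2*k+2) * y (2*k+1))
     else if 3 \<le> m \<and> m \<le> 2*p \<and> odd m then \<phi> ((m-1) div 2) * (x 2 * y m - x m * y 2)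
     else if 4 \<le> m \<and> m \<le> 2*p \<and> even m then - (1 + \<phi> ((m-2) div 2)) * (x 2 * y m - x m * y 2)
     else 0)"

lemma F_br_one[simp]:
  "F_br p \<phi> x y 1 = x 1 * y 2 - x 2 * y 1 + (\<Sum>k\<in>{1..p-1}. x (2*k+1) * y (2*k+2) - x (2*k+2) * y (2*k+1))"
  unfolding F_br_def by (simp only: refl if_True)

lemma F_br_two[simp]: "F_br p \<phi> x y 2 = 0"
  by (simp add: F_br_def)

lemma F_br_odd[simp]:
  "k \<in> {1..p-1} \<Longrightarrow> F_br p \<phi> x y (2*k+1) = \<phi> k * (x 2 * y (2*k+1) - x (2*k+1) * y 2)"
  by (auto simp add: F_br_def)

lemma F_br_even[simp]:
  "k \<in> {1..p-1} \<Longrightarrow> F_br p \<phi> x y (2*k+2) = - (1 + \<phi> k) * (x 2 * y (2*k+2) - x (2*k+2) * y 2)"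
  by (auto simp add: F_br_def)

lemma F_br_outside: "m \<notin> {1..2*p} \<Longrightarrow> p \<ge> 1 \<Longrightarrow> F_br p \<phi> x y m = 0"
  by (auto simp add: F_br_def)

lemma sum_indicator_mult[simp]:
  "finite S \<Longrightarrow> (\<Sum>x\<in>S. (if x = a then 1 else 0) * (if x = b then 1 else (0::complex)))
     = (if a = b \<and> a \<in> S then 1 else 0)"
  by (induction S rule: finite_induct) auto

lemma sum_neg_indicator_mult[simp]:
  "finite S \<Longrightarrow> (\<Sum>x\<in>S. - ((if x = a then 1 else 0) * (if x = b then 1 else (0::complex))))
     = (if a = b \<and> a \<in> S then -1 else 0)"
  by (auto simp add: sum_negf)

lemma Fbasis_bracket_eq_F_br:
  assumes "i \<in> {1..2*p}" "j \<in> {1..2*p}"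
  shows "Fbasis_bracket p \<phi> i j = F_br p \<phi> (unitv i) (unitv j)"
proof
  fix m
  show "Fbasis_bracket p \<phi> i j m = F_br p \<phi> (unitv i) (unitv j) m"
  proof (cases "m \<in> {1..2*p}")
    case False
    moreover have "p \<ge> 1" using assms by auto
    ultimately show ?thesis
      using assms by (auto simp add: F_br_outside Fbasis_bracket_def Fupper_def unitv_def vsc_def)
  next
    case True
    show ?thesis
      by (rule F_index_cases[OF assms(1)]; rule F_index_cases[OF assms(2)]; rule F_index_cases[OF True])
        (auto simp add: Fbasis_bracket_def Fupper_def unitv_def vsc_def F_br_def)
  qed
qed

lemma F_br_Suc_simps[simp]:
  "F_br p \<phi> x y (Suc 0) = x 1 * y 2 - x 2 * y 1 + (\<Sum>k\<in>{1..p-1}. x (2*k+1) * y (2*k+2) - x (2*k+2) * y (2*k+1))"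
  "k \<in> {1..p-1} \<Longrightarrow> F_br p \<phi> x y (Suc (2*k)) = \<phi> k * (x 2 * y (2*k+1) - x (2*k+1) * y 2)"
  "k \<in> {1..p-1} \<Longrightarrow> F_br p \<phi> x y (Suc (Suc (2*k))) = - (1 + \<phi> k) * (x 2 * y (2*k+2) - x (2*k+2) * y 2)"
  using F_br_one F_br_odd F_br_even by simp_all

lemma sum_apply: "(sum f S) x = (\<Sum>i\<in>S. f i x)"
  by (induction S rule: infinite_finite_induct) auto

lemma unitv_in_Fcarrier[simp]: "j \<in> {1..2*p} \<Longrightarrow> unitv j \<in> Fcarrier p"
  by (auto simp: Fcarrier_def unitv_def)

lemma Fcarrier_outside: "x \<in> Fcarrier p \<Longrightarrow> i \<notin> {1..2*p} \<Longrightarrow> x i = 0"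
  by (auto simp: Fcarrier_def)

lemma Fcarrier_add[simp]: "x \<in> Fcarrier p \<Longrightarrow> y \<in> Fcarrier p \<Longrightarrow> x + y \<in> Fcarrier p"
  and Fcarrier_vsc[simp]: "x \<in> Fcarrier p \<Longrightarrow> vsc c x \<in> Fcarrier p"
  and Fcarrier_zero[simp]: "0 \<in> Fcarrier p"
  by (auto simp: Fcarrier_def vsc_def)

lemma Fcarrier_sum: "(\<And>i. i \<in> S \<Longrightarrow> f i \<in> Fcarrier p) \<Longrightarrow> sum f S \<in> Fcarrier p"
  by (induction S rule: infinite_finite_induct) auto

lemma Fcarrier_coord_expansion:
  assumes "x \<in> Fcarrier p"
  shows "x n = (\<Sum>i\<in>{1..2*p}. x i * unitv i n)"
proof -
  have "(\<Sum>i\<in>{1..2*p}. x i * unitv i n) = (\<Sum>i\<in>{1..2*p}. if n = i then x n else 0)"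
    by (rule sum.cong) (auto simp: unitv_def)
  then show ?thesis
    using assms by (auto simp: Fcarrier_outside)
qed

lemma Fcarrier_unit_expansion: "x \<in> Fcarrier p \<Longrightarrow> x = (\<Sum>i\<in>{1..2*p}. vsc (x i) (unitv i))"
  by (rule ext) (simp add: sum_apply vsc_def Fcarrier_coord_expansion[of x p])

lemma F_br_add_left: "F_br p \<phi> (\<lambda>n. a n + b n) y m = F_br p \<phi> a y m + F_br p \<phi> b y m"
  and F_br_add_right: "F_br p \<phi> y (\<lambda>n. a n + b n) m = F_br p \<phi> y a m + F_br p \<phi> y b m"
  by (simp_all add: F_br_def sum.distrib[symmetric] algebra_simps)

lemma F_br_scale_left: "F_br p \<phi> (\<lambda>n. c * a n) y m = c * F_br p \<phi> a y m"
  and F_br_scale_right: "F_br p \<phi> y (\<lambda>n. c * a n) m = c * F_br p \<phi> y a m"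
  by (simp_all add: F_br_def sum_distrib_left algebra_simps)

lemma F_br_sum_left: "F_br p \<phi> (\<lambda>n. \<Sum>i\<in>S. c i * u i n) y m = (\<Sum>i\<in>S. c i * F_br p \<phi> (u i) y m)"
proof (induction S rule: infinite_finite_induct)
  case (insert a F)
  then show ?case by (simp add: F_br_add_left F_br_scale_left)
qed (simp_all add: F_br_def)

lemma F_br_sum_right: "F_br p \<phi> y (\<lambda>n. \<Sum>i\<in>S. c i * u i n) m = (\<Sum>i\<in>S. c i * F_br p \<phi> y (u i) m)"
proof (induction S rule: infinite_finite_induct)
  case (insert a F)
  then show ?case by (simp add: F_br_add_right F_br_scale_right)
qed (simp_all add: F_br_def)

lemma Fbracket_eq_F_br:
  assumes "x \<in> Fcarrier p" "y \<in> Fcarrier p"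
  shows "Fbracket p \<phi> x y = F_br p \<phi> x y"
proof
  fix m
  have "x = (\<lambda>n. \<Sum>i\<in>{1..2*p}. x i * unitv i n)" "y = (\<lambda>n. \<Sum>j\<in>{1..2*p}. y j * unitv j n)"
    using Fcarrier_coord_expansion[OF assms(1)] Fcarrier_coord_expansion[OF assms(2)] by blast+
  then have "F_br p \<phi> x y m
      = F_br p \<phi> (\<lambda>n. \<Sum>i\<in>{1..2*p}. x i * unitv i n) (\<lambda>n. \<Sum>j\<in>{1..2*p}. y j * unitv j n) m"
    by simp
  also have "\<dots> = (\<Sum>i\<in>{1..2*p}. x i * (\<Sum>j\<in>{1..2*p}. y j * F_br p \<phi> (unitv i) (unitv j) m))"
    unfolding F_br_sum_left F_br_sum_right ..
  also have "\<dots> = (\<Sum>i\<in>{1..2*p}. \<Sum>j\<in>{1..2*p}. x i * y j * Fbasis_bracket p \<phi> i j m)"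
    unfolding sum_distrib_left
    by (intro sum.cong refl) (simp add: Fbasis_bracket_eq_F_br mult.assoc)
  finally show "Fbracket p \<phi> x y m = F_br p \<phi> x y m" by (simp add: Fbracket_def)
qed

section \<open>Derivations of F_phi\<close>

datatype der_coefs =
  Coefs (coef_a: complex) (coef_\<alpha>: complex)
    (coef_b: "nat \<Rightarrow> complex") (coef_d: "nat \<Rightarrow> complex") (coef_e: "nat \<Rightarrow> complex")

text \<open>The derivation with coefficients (a, alpha, b, d, e) acts on the basis by
  X_1 \<mapsto> a X_1,
  X_2 \<mapsto> alpha X_1 - sum_k (phi_k e_k X_(2k+1) + (1 + phi_k) d_k X_(2k+2)),
  X_(2k+1) \<mapsto> d_k X_1 + b_k X_(2k+1) and
  X_(2k+2) \<mapsto> e_k X_1 + (a - b_k) X_(2k+2).\<close>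
definition der_map :: "nat \<Rightarrow> (nat \<Rightarrow> complex) \<Rightarrow> der_coefs \<Rightarrow> (nat \<Rightarrow> complex) \<Rightarrow> nat \<Rightarrow> complex" where
  "der_map p \<phi> C x = (\<lambda>m.
     if m = 1 then coef_a C * x 1 + coef_\<alpha> C * x 2
       + (\<Sum>k\<in>{1..p-1}. coef_d C k * x (2*k+1) + coef_e C k * x (2*k+2))
     else if 3 \<le> m \<and> m \<le> 2*p \<and> odd m then
       - \<phi> ((m-1) div 2) * coef_e C ((m-1) div 2) * x 2 + coef_b C ((m-1) div 2) * x m
     else if 4 \<le> m \<and> m \<le> 2*p \<and> even m then
       - (1 + \<phi> ((m-2) div 2)) * coef_d C ((m-2) div 2) * x 2 + (coef_a C - coef_b C ((m-2) div 2)) * x m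
     else 0)"

definition der_of :: "nat \<Rightarrow> (nat \<Rightarrow> complex) \<Rightarrow> der_coefs \<Rightarrow> (nat \<Rightarrow> complex) \<Rightarrow> nat \<Rightarrow> complex" where
  "der_of p \<phi> C = (\<lambda>x. if x \<in> Fcarrier p then der_map p \<phi> C x else 0)"

definition coefs_of :: "((nat \<Rightarrow> complex) \<Rightarrow> nat \<Rightarrow> complex) \<Rightarrow> der_coefs" where
  "coefs_of X = Coefs (X (unitv 1) 1) (X (unitv 2) 1)
     (\<lambda>k. X (unitv (2*k+1)) (2*k+1)) (\<lambda>k. X (unitv (2*k+1)) 1) (\<lambda>k. X (unitv (2*k+2)) 1)"

lemma der_map_one[simp]:
  "der_map p \<phi> C x 1 = coef_a C * x 1 + coef_\<alpha> C * x 2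
     + (\<Sum>k\<in>{1..p-1}. coef_d C k * x (2*k+1) + coef_e C k * x (2*k+2))"
  unfolding der_map_def by (simp only: refl if_True)

lemma der_map_two[simp]: "der_map p \<phi> C x 2 = 0"
  by (simp add: der_map_def)

lemma der_map_odd[simp]:
  "k \<in> {1..p-1} \<Longrightarrow> der_map p \<phi> C x (2*k+1) = - \<phi> k * coef_e C k * x 2 + coef_b C k * x (2*k+1)"
  by (auto simp add: der_map_def)

lemma der_map_even[simp]:
  "k \<in> {1..p-1} \<Longrightarrow>
     der_map p \<phi> C x (2*k+2) = - (1 + \<phi> k) * coef_d C k * x 2 + (coef_a C - coef_b C k) * x (2*k+2)"
  by (auto simp add: der_map_def)

lemma der_map_Suc_simps[simp]:
  "der_map p \<phi> C x (Suc 0) = coef_a C * x 1 + coef_\<alpha> C * x 2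
     + (\<Sum>k\<in>{1..p-1}. coef_d C k * x (2*k+1) + coef_e C k * x (2*k+2))"
  "k \<in> {1..p-1} \<Longrightarrow> der_map p \<phi> C x (Suc (2*k)) = - \<phi> k * coef_e C k * x 2 + coef_b C k * x (2*k+1)"
  "k \<in> {1..p-1} \<Longrightarrow>
     der_map p \<phi> C x (Suc (Suc (2*k))) = - (1 + \<phi> k) * coef_d C k * x 2 + (coef_a C - coef_b C k) * x (2*k+2)"
  using der_map_one der_map_odd der_map_even by simp_all

lemma der_map_outside: "m \<notin> {1..2*p} \<Longrightarrow> p \<ge> 1 \<Longrightarrow> der_map p \<phi> C x m = 0"
  by (auto simp add: der_map_def)

lemma der_map_in_Fcarrier: "p \<ge> 1 \<Longrightarrow> der_map p \<phi> C x \<in> Fcarrier p"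
  by (auto simp: Fcarrier_def der_map_outside)

lemma F_br_in_Fcarrier: "p \<ge> 1 \<Longrightarrow> F_br p \<phi> x y \<in> Fcarrier p"
  by (auto simp: Fcarrier_def F_br_outside)

lemma Fbracket_in_Fcarrier:
  "x \<in> Fcarrier p \<Longrightarrow> y \<in> Fcarrier p \<Longrightarrow> p \<ge> 1 \<Longrightarrow> Fbracket p \<phi> x y \<in> Fcarrier p"
  by (simp add: Fbracket_eq_F_br F_br_in_Fcarrier)

lemma der_map_add: "der_map p \<phi> C (x + y) = der_map p \<phi> C x + der_map p \<phi> C y"
  by (rule ext) (simp add: der_map_def sum.distrib algebra_simps)

lemma der_map_vsc: "der_map p \<phi> C (vsc c x) = vsc c (der_map p \<phi> C x)"
  by (rule ext) (simp add: der_map_def vsc_def sum_distrib_left algebra_simps)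

lemma der_map_leibniz:
  assumes "p \<ge> 1"
  shows "der_map p \<phi> C (F_br p \<phi> x y) m = F_br p \<phi> (der_map p \<phi> C x) y m + F_br p \<phi> x (der_map p \<phi> C y) m"
proof (cases "m \<in> {1..2*p}")
  case False
  then show ?thesis using assms by (simp add: der_map_outside F_br_outside)
next
  case True
  then show ?thesis
  proof (cases rule: F_index_cases)
    case 1
    then show ?thesis
      by simp (simp add: algebra_simps sum.distrib sum_distrib_left sum_distrib_right sum_subtractf)
  next
    case (3 k)
    then show ?thesis by simp (simp add: algebra_simps)
  next
    case (4 k)
    then show ?thesis by simp (simp add: algebra_simps)
  qed simp
qed

lemma der_of_in_DerF: "p \<ge> 1 \<Longrightarrow> der_of p \<phi> C \<in> DerF p \<phi>"
  unfolding DerF_def derivations_def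
proof (intro CollectI conjI ballI allI impI)
  assume p: "p \<ge> 1"
  fix x y assume x: "x \<in> Fcarrier p" and y: "y \<in> Fcarrier p"
  have "der_map p \<phi> C (F_br p \<phi> x y) = F_br p \<phi> (der_map p \<phi> C x) y + F_br p \<phi> x (der_map p \<phi> C y)"
    by (rule ext) (simp add: der_map_leibniz[OF p])
  then show "der_of p \<phi> C (Fbracket p \<phi> x y)
      = Fbracket p \<phi> (der_of p \<phi> C x) y + Fbracket p \<phi> x (der_of p \<phi> C y)"
    using x y p by (auto simp: der_of_def Fbracket_in_Fcarrier Fbracket_eq_F_br der_map_in_Fcarrier F_br_in_Fcarrier)
qed (auto simp: der_of_def der_map_in_Fcarrier der_map_add der_map_vsc)

lemma derivation_zero:
  assumes "d \<in> derivations (Fcarrier p) br vsc"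
  shows "d 0 = 0"
proof -
  have "d (0 + 0) = d 0 + d 0"
    using assms Fcarrier_zero unfolding derivations_def by blast
  then show ?thesis by simp
qed

lemma derivation_sum:
  assumes "d \<in> derivations (Fcarrier p) br vsc" "S \<subseteq> {1..2*p}"
  shows "d (\<Sum>i\<in>S. vsc (c i) (unitv i)) = (\<Sum>i\<in>S. vsc (c i) (d (unitv i)))"
  using assms(2)
proof (induction S rule: infinite_finite_induct)
  case (infinite A)
  then show ?case by (meson finite_atLeastAtMost finite_subset)
next
  case empty
  then show ?case using derivation_zero[OF assms(1)] by (simp only: sum.empty)
next
  case (insert a F)
  then have a: "a \<in> {1..2*p}" and F: "(\<Sum>i\<in>F. vsc (c i) (unitv i)) \<in> Fcarrier p"
    by (auto intro!: Fcarrier_sum)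
  have "d (\<Sum>i\<in>insert a F. vsc (c i) (unitv i)) = d (vsc (c a) (unitv a) + (\<Sum>i\<in>F. vsc (c i) (unitv i)))"
    using insert by simp
  also have "\<dots> = vsc (c a) (d (unitv a)) + d (\<Sum>i\<in>F. vsc (c i) (unitv i))"
    using assms(1) a F unfolding derivations_def by auto
  also have "\<dots> = (\<Sum>i\<in>insert a F. vsc (c i) (d (unitv i)))"
    using insert by simp
  finally show ?case .
qed

lemma derivation_ext:
  assumes "d \<in> derivations (Fcarrier p) br vsc" "d' \<in> derivations (Fcarrier p) br' vsc"
    and "\<And>i. i \<in> {1..2*p} \<Longrightarrow> d (unitv i) = d' (unitv i)"
  shows "d = d'"
proof
  fix x
  show "d x = d' x"
  proof (cases "x \<in> Fcarrier p")
    case True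
    then have "x = (\<Sum>i\<in>{1..2*p}. vsc (x i) (unitv i))"
      by (rule Fcarrier_unit_expansion)
    then show ?thesis
      using derivation_sum[OF assms(1), of "{1..2*p}" x] derivation_sum[OF assms(2), of "{1..2*p}" x]
        assms(3) by simp
  next
    case False
    then show ?thesis using assms(1,2) unfolding derivations_def by auto
  qed
qed

text \<open>Eigenvalue of ad X_2 on X_m.\<close>
definition weight :: "nat \<Rightarrow> (nat \<Rightarrow> complex) \<Rightarrow> nat \<Rightarrow> complex" where
  "weight p \<phi> m =
    (if m = 1 then -1 else if m = 2 then 0
     else if 3 \<le> m \<and> m \<le> 2*p \<and> odd m then \<phi> ((m-1) div 2)
     else if 4 \<le> m \<and> m \<le> 2*p \<and> even m then - (1 + \<phi> ((m-2) div 2)) else 0)"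

lemma weight_simps[simp]:
  "weight p \<phi> 1 = -1" "weight p \<phi> (Suc 0) = -1" "weight p \<phi> 2 = 0"
  "k \<in> {1..p-1} \<Longrightarrow> weight p \<phi> (2*k+1) = \<phi> k"
  "k \<in> {1..p-1} \<Longrightarrow> weight p \<phi> (Suc (2*k)) = \<phi> k"
  "k \<in> {1..p-1} \<Longrightarrow> weight p \<phi> (2*k+2) = - (1 + \<phi> k)"
  "k \<in> {1..p-1} \<Longrightarrow> weight p \<phi> (Suc (Suc (2*k))) = - (1 + \<phi> k)"
  by (auto simp: weight_def)

lemma unitv_apply: "unitv k i = (if i = k then 1 else 0)"
  by (simp add: unitv_def)

lemma mult_if_one_zero[simp]:
  "x * (if P then 1 else 0) = (if P then x else (0::complex))"
  "(if P then 1 else 0) * x = (if P then x else (0::complex))"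
  "- (if P then a else 0) = (if P then - a else (0::complex))"
  by auto

lemma F_br_antisym: "F_br p \<phi> x y m = - F_br p \<phi> y x m"
  by (simp add: F_br_def algebra_simps sum_negf[symmetric] sum_subtractf)

lemma F_br_unit_one: "p \<ge> 1 \<Longrightarrow> F_br p \<phi> u (unitv 1) m = (if m = 1 then - u 2 else 0)"
proof (cases "m \<in> {1..2*p}")
  case True
  then show ?thesis by (cases rule: F_index_cases) (simp_all add: unitv_def)
qed (auto simp add: F_br_outside)

lemma F_br_unit_two: "u \<in> Fcarrier p \<Longrightarrow> p \<ge> 1 \<Longrightarrow> F_br p \<phi> u (unitv 2) m = - weight p \<phi> m * u m"
proof (cases "m \<in> {1..2*p}")
  case True
  then show ?thesis
    by (cases rule: F_index_cases) (simp_all add: unitv_def, simp_all add: algebra_simps)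
qed (simp add: F_br_outside Fcarrier_outside)

lemma F_br_unit_odd:
  "k \<in> {1..p-1} \<Longrightarrow> F_br p \<phi> u (unitv (2*k+1)) m =
     (if m = 1 then - u (2*k+2) else if m = 2*k+1 then \<phi> k * u 2 else 0)"
proof (cases "m \<in> {1..2*p}")
  case True
  assume k: "k \<in> {1..p-1}"
  from True show ?thesis by (cases rule: F_index_cases) (use k in \<open>auto simp add: unitv_def\<close>)
qed (auto simp add: F_br_outside)

lemma F_br_unit_even:
  "k \<in> {1..p-1} \<Longrightarrow> F_br p \<phi> u (unitv (2*k+2)) m =
     (if m = 1 then u (2*k+1) else if m = 2*k+2 then - (1 + \<phi> k) * u 2 else 0)"
proof (cases "m \<in> {1..2*p}")
  case True
  assume k: "k \<in> {1..p-1}"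
  from True show ?thesis by (cases rule: F_index_cases) (use k in \<open>auto simp add: unitv_def\<close>)
qed (auto simp add: F_br_outside)

lemma not_in_Omega1D:
  assumes "\<not> in_Omega1 p \<phi>" "k \<in> {1..p-1}" "k' \<in> {1..p-1}"
  shows "\<phi> k \<noteq> 0" "\<phi> k + 1 \<noteq> 0" "1 + \<phi> k + \<phi> k' \<noteq> 0" "k \<noteq> k' \<Longrightarrow> \<phi> k \<noteq> \<phi> k'"
  using assms unfolding in_Omega1_def by blast+

lemma DerF_derivation: "X \<in> DerF p \<phi> \<Longrightarrow> X \<in> derivations (Fcarrier p) (Fbracket p \<phi>) vsc"
  by (simp add: DerF_def)

lemma DerF_closed: "X \<in> DerF p \<phi> \<Longrightarrow> x \<in> Fcarrier p \<Longrightarrow> X x \<in> Fcarrier p"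
  by (simp add: DerF_def derivations_def)

lemma DerF_vsc: "X \<in> DerF p \<phi> \<Longrightarrow> x \<in> Fcarrier p \<Longrightarrow> X (vsc c x) = vsc c (X x)"
  by (simp add: DerF_def derivations_def)

lemma DerF_leibniz:
  assumes "X \<in> DerF p \<phi>" "x \<in> Fcarrier p" "y \<in> Fcarrier p"
  shows "X (F_br p \<phi> x y) = F_br p \<phi> (X x) y + F_br p \<phi> x (X y)"
proof -
  have "X (Fbracket p \<phi> x y) = Fbracket p \<phi> (X x) y + Fbracket p \<phi> x (X y)"
    using assms unfolding DerF_def derivations_def by blast
  then show ?thesis
    using assms DerF_closed[OF assms(1)] by (simp only: Fbracket_eq_F_br)
qed

text \<open>Apply X to [X_j, X_2] = - weight_j X_j.\<close>
lemma DerF_weight_equation: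
  assumes X: "X \<in> DerF p \<phi>" and p: "p \<ge> 1" and j: "j \<in> {1..2*p}"
  shows "(weight p \<phi> m - weight p \<phi> j) * X (unitv j) m = - F_br p \<phi> (X (unitv 2)) (unitv j) m"
proof -
  have e2: "unitv 2 \<in> Fcarrier p" and ej: "unitv j \<in> Fcarrier p"
    using p j by simp_all
  have br: "F_br p \<phi> (unitv j) (unitv 2) = vsc (- weight p \<phi> j) (unitv j)"
    by (rule ext) (subst F_br_unit_two[OF ej p], simp add: vsc_def unitv_def)
  have "vsc (- weight p \<phi> j) (X (unitv j)) m
      = F_br p \<phi> (X (unitv j)) (unitv 2) m + F_br p \<phi> (unitv j) (X (unitv 2)) m"
    using DerF_leibniz[OF X ej e2] unfolding br DerF_vsc[OF X ej] by simp
  then show ?thesis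
    using F_br_unit_two[OF DerF_closed[OF X ej] p, of \<phi> m] F_br_antisym[of p \<phi> "unitv j" "X (unitv 2)" m]
    by (simp add: vsc_def algebra_simps)
qed

text \<open>Apply X to [X_(2k+1), X_(2k+2)] = X_1.\<close>
lemma DerF_trace_relation:
  assumes X: "X \<in> DerF p \<phi>" and k: "k \<in> {1..p-1}"
  shows "X (unitv (2*k+2)) (2*k+2) = X (unitv 1) 1 - X (unitv (2*k+1)) (2*k+1)"
proof -
  have p: "p \<ge> 1" using k by auto
  have e: "unitv (2*k+1) \<in> Fcarrier p" "unitv (2*k+2) \<in> Fcarrier p" using k by auto
  have br: "F_br p \<phi> (unitv (2*k+1)) (unitv (2*k+2)) = unitv 1"
    by (rule ext) (subst F_br_unit_even[OF k], simp add: unitv_def)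
  have "X (unitv 1) 1
      = F_br p \<phi> (X (unitv (2*k+1))) (unitv (2*k+2)) 1 + F_br p \<phi> (unitv (2*k+1)) (X (unitv (2*k+2))) 1"
    using DerF_leibniz[OF X e] unfolding br by simp
  then show ?thesis
    using F_br_unit_even[OF k, of \<phi> "X (unitv (2*k+1))" 1] F_br_unit_odd[OF k, of \<phi> "X (unitv (2*k+2))" 1]
      F_br_antisym[of p \<phi> "unitv (2*k+1)" "X (unitv (2*k+2))" 1]
    by simp
qed

context
  fixes X p \<phi>
  assumes X: "X \<in> DerF p \<phi>" and p: "p \<ge> 1" and generic: "\<not> in_Omega1 p \<phi>"
begin

lemma DerF_unit_two_coord_two: "X (unitv 2) 2 = 0"
  using DerF_weight_equation[OF X p, of 1 1, unfolded F_br_unit_one[OF p]] p by simp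

lemma DerF_unit_one_coord: "m \<in> {1..2*p} \<Longrightarrow> m \<noteq> 1 \<Longrightarrow> X (unitv 1) m = 0"
proof -
  assume m: "m \<in> {1..2*p}" "m \<noteq> 1"
  have e: "(weight p \<phi> m + 1) * X (unitv 1) m = 0"
    using DerF_weight_equation[OF X p, of 1 m, unfolded F_br_unit_one[OF p]] p m by simp
  from m(1) show ?thesis
  proof (cases rule: F_index_cases)
    case (3 k)
    then show ?thesis using e not_in_Omega1D(2)[OF generic, of k k] by simp
  next
    case (4 k)
    then show ?thesis using e not_in_Omega1D(1)[OF generic, of k k] by simp
  qed (use e m in auto)
qed

lemma DerF_unit_odd_coord:
  "k \<in> {1..p-1} \<Longrightarrow> m \<in> {1..2*p} \<Longrightarrow> m \<noteq> 1 \<Longrightarrow> m \<noteq> 2*k+1 \<Longrightarrow> X (unitv (2*k+1)) m = 0"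
proof -
  assume k: "k \<in> {1..p-1}" and m: "m \<in> {1..2*p}" "m \<noteq> 1" "m \<noteq> 2*k+1"
  have "2*k+1 \<in> {1..2*p}" using k by auto
  then have e: "(weight p \<phi> m - \<phi> k) * X (unitv (2*k+1)) m = 0"
    using DerF_weight_equation[OF X p, of "2*k+1" m, unfolded F_br_unit_odd[OF k]] k m by simp
  have "weight p \<phi> m - \<phi> k \<noteq> 0"
    using m(1)
  proof (cases rule: F_index_cases)
    case 2
    then show ?thesis using not_in_Omega1D(1)[OF generic k k] by simp
  next
    case (3 k')
    then show ?thesis using not_in_Omega1D(4)[OF generic 3(1) k] m by auto
  next
    case (4 k')
    then have "weight p \<phi> m = - (1 + \<phi> k')" by simp
    moreover have "- (1 + \<phi> k') - \<phi> k = - (1 + \<phi> k' + \<phi> k)" by simp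
    ultimately show ?thesis using not_in_Omega1D(3)[OF generic 4(1) k] by (metis neg_equal_0_iff_equal)
  qed (use m in auto)
  then show ?thesis using e by simp
qed

lemma DerF_unit_even_coord:
  "k \<in> {1..p-1} \<Longrightarrow> m \<in> {1..2*p} \<Longrightarrow> m \<noteq> 1 \<Longrightarrow> m \<noteq> 2*k+2 \<Longrightarrow> X (unitv (2*k+2)) m = 0"
proof -
  assume k: "k \<in> {1..p-1}" and m: "m \<in> {1..2*p}" "m \<noteq> 1" "m \<noteq> 2*k+2"
  have "2*k+2 \<in> {1..2*p}" using k by auto
  then have e: "(weight p \<phi> m - - (1 + \<phi> k)) * X (unitv (2*k+2)) m = 0"
    using DerF_weight_equation[OF X p, of "2*k+2" m, unfolded F_br_unit_even[OF k] weight_simps(6)[OF k]] k m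
    by simp
  have "weight p \<phi> m - - (1 + \<phi> k) \<noteq> 0"
    using m(1)
  proof (cases rule: F_index_cases)
    case 2
    have "(0::complex) - - (1 + \<phi> k) = \<phi> k + 1" by simp
    then show ?thesis using not_in_Omega1D(2)[OF generic k k] 2 by simp
  next
    case (3 k')
    then have "weight p \<phi> m = \<phi> k'" by simp
    moreover have "\<phi> k' - - (1 + \<phi> k) = 1 + \<phi> k' + \<phi> k" by simp
    ultimately show ?thesis using not_in_Omega1D(3)[OF generic 3(1) k] by metis
  next
    case (4 k')
    then have "weight p \<phi> m = - (1 + \<phi> k')" by simp
    moreover have "- (1 + \<phi> k') - - (1 + \<phi> k) = \<phi> k - \<phi> k'" by simp
    ultimately show ?thesis using not_in_Omega1D(4)[OF generic 4(1) k] m 4 by auto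
  qed (use m in auto)
  then show ?thesis using e by simp
qed

lemma DerF_unit_two_coord_odd: "k \<in> {1..p-1} \<Longrightarrow> X (unitv 2) (2*k+1) = - \<phi> k * X (unitv (2*k+2)) 1"
proof -
  assume k: "k \<in> {1..p-1}"
  then have "2*k+2 \<in> {1..2*p}" by auto
  then show ?thesis
    using DerF_weight_equation[OF X p, of "2*k+2" 1, unfolded F_br_unit_even[OF k] weight_simps(6)[OF k]] k
    by simp
qed

lemma DerF_unit_two_coord_even:
  "k \<in> {1..p-1} \<Longrightarrow> X (unitv 2) (2*k+2) = - (1 + \<phi> k) * X (unitv (2*k+1)) 1"
proof -
  assume k: "k \<in> {1..p-1}"
  then have "2*k+1 \<in> {1..2*p}" by auto
  then show ?thesis
    using DerF_weight_equation[OF X p, of "2*k+1" 1, unfolded F_br_unit_odd[OF k] weight_simps(4)[OF k]] k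
    by (simp add: algebra_simps)
qed

lemma DerF_eq_der_of_coefs: "X = der_of p \<phi> (coefs_of X)"
proof (rule derivation_ext[OF DerF_derivation[OF X] DerF_derivation[OF der_of_in_DerF[OF p]]])
  fix i assume i: "i \<in> {1..2*p}"
  show "X (unitv i) = der_of p \<phi> (coefs_of X) (unitv i)"
  proof
    fix m
    have D: "der_of p \<phi> (coefs_of X) (unitv i) m = der_map p \<phi> (coefs_of X) (unitv i) m"
      using i by (simp add: der_of_def)
    show "X (unitv i) m = der_of p \<phi> (coefs_of X) (unitv i) m"
    proof (cases "m \<in> {1..2*p}")
      case False
      then show ?thesis
        unfolding D using der_map_outside[OF False p] Fcarrier_outside[OF DerF_closed[OF X] False] i by simp
    next
      case True
      have "X (unitv 1) 2 = 0"
        using DerF_unit_one_coord[of 2] p by simp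
      note coords = this DerF_unit_one_coord DerF_unit_odd_coord DerF_unit_even_coord DerF_unit_two_coord_two
        DerF_unit_two_coord_odd DerF_unit_two_coord_even DerF_trace_relation[OF X]
      show ?thesis unfolding D
        by (rule F_index_cases[OF i]; rule F_index_cases[OF True])
          (auto simp: coefs_of_def unitv_apply coords coords[simplified] p)
    qed
  qed
qed

end

section \<open>The Lie algebra of coefficients\<close>

text \<open>Coefficients at indices outside {1..p-1} do not affect the derivation.\<close>
definition coefs_eq :: "nat \<Rightarrow> der_coefs \<Rightarrow> der_coefs \<Rightarrow> bool" where
  "coefs_eq p C D \<longleftrightarrow> coef_a C = coef_a D \<and> coef_\<alpha> C = coef_\<alpha> D
     \<and> (\<forall>k\<in>{1..p-1}. coef_b C k = coef_b D k \<and> coef_d C k = coef_d D k \<and> coef_e C k = coef_e D k)"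

definition coefs_zero :: der_coefs where
  "coefs_zero = Coefs 0 0 (\<lambda>_. 0) (\<lambda>_. 0) (\<lambda>_. 0)"

definition coefs_add :: "der_coefs \<Rightarrow> der_coefs \<Rightarrow> der_coefs" where
  "coefs_add C D = Coefs (coef_a C + coef_a D) (coef_\<alpha> C + coef_\<alpha> D)
     (\<lambda>k. coef_b C k + coef_b D k) (\<lambda>k. coef_d C k + coef_d D k) (\<lambda>k. coef_e C k + coef_e D k)"

definition coefs_scale :: "complex \<Rightarrow> der_coefs \<Rightarrow> der_coefs" where
  "coefs_scale c C = Coefs (c * coef_a C) (c * coef_\<alpha> C)
     (\<lambda>k. c * coef_b C k) (\<lambda>k. c * coef_d C k) (\<lambda>k. c * coef_e C k)"

definition coefs_bracket :: "nat \<Rightarrow> der_coefs \<Rightarrow> der_coefs \<Rightarrow> der_coefs" where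
  "coefs_bracket p C D = Coefs 0
     (coef_a C * coef_\<alpha> D - coef_a D * coef_\<alpha> C
       + (\<Sum>k\<in>{1..p-1}. coef_d C k * coef_e D k - coef_e C k * coef_d D k))
     (\<lambda>k. 0)
     (\<lambda>k. (coef_a C - coef_b C k) * coef_d D k - (coef_a D - coef_b D k) * coef_d C k)
     (\<lambda>k. coef_b C k * coef_e D k - coef_b D k * coef_e C k)"

lemma coefs_zero_sel[simp]:
  "coef_a coefs_zero = 0" "coef_\<alpha> coefs_zero = 0"
  "coef_b coefs_zero k = 0" "coef_d coefs_zero k = 0" "coef_e coefs_zero k = 0"
  by (simp_all add: coefs_zero_def)

lemma coefs_add_sel[simp]:
  "coef_a (coefs_add C D) = coef_a C + coef_a D" "coef_\<alpha> (coefs_add C D) = coef_\<alpha> C + coef_\<alpha> D"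
  "coef_b (coefs_add C D) k = coef_b C k + coef_b D k" "coef_d (coefs_add C D) k = coef_d C k + coef_d D k"
  "coef_e (coefs_add C D) k = coef_e C k + coef_e D k"
  by (simp_all add: coefs_add_def)

lemma coefs_bracket_sel[simp]:
  "coef_a (coefs_bracket p C D) = 0"
  "coef_\<alpha> (coefs_bracket p C D) = coef_a C * coef_\<alpha> D - coef_a D * coef_\<alpha> C
     + (\<Sum>k\<in>{1..p-1}. coef_d C k * coef_e D k - coef_e C k * coef_d D k)"
  "coef_b (coefs_bracket p C D) k = 0"
  "coef_d (coefs_bracket p C D) k = (coef_a C - coef_b C k) * coef_d D k - (coef_a D - coef_b D k) * coef_d C k"
  "coef_e (coefs_bracket p C D) k = coef_b C k * coef_e D k - coef_b D k * coef_e C k"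
  by (simp_all add: coefs_bracket_def)

lemma coefs_eq_refl[simp]: "coefs_eq p C C"
  and coefs_eq_sym: "coefs_eq p C D \<Longrightarrow> coefs_eq p D C"
  and coefs_eq_trans: "coefs_eq p C D \<Longrightarrow> coefs_eq p D E \<Longrightarrow> coefs_eq p C E"
  by (simp_all add: coefs_eq_def)

lemma coefs_eqD:
  assumes "coefs_eq p C D"
  shows "coef_a C = coef_a D" "coef_\<alpha> C = coef_\<alpha> D"
    "k \<in> {1..p-1} \<Longrightarrow> coef_b C k = coef_b D k"
    "k \<in> {1..p-1} \<Longrightarrow> coef_d C k = coef_d D k"
    "k \<in> {1..p-1} \<Longrightarrow> coef_e C k = coef_e D k"
  using assms by (auto simp: coefs_eq_def)

lemma coefs_eqI:
  assumes "coef_a C = coef_a D" "coef_\<alpha> C = coef_\<alpha> D"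
    "\<And>k. k \<in> {1..p-1} \<Longrightarrow> coef_b C k = coef_b D k"
    "\<And>k. k \<in> {1..p-1} \<Longrightarrow> coef_d C k = coef_d D k"
    "\<And>k. k \<in> {1..p-1} \<Longrightarrow> coef_e C k = coef_e D k"
  shows "coefs_eq p C D"
  using assms by (simp add: coefs_eq_def)

lemma coefs_bracket_cong:
  "coefs_eq p C C' \<Longrightarrow> coefs_eq p D D' \<Longrightarrow> coefs_eq p (coefs_bracket p C D) (coefs_bracket p C' D')"
  unfolding coefs_eq_def coefs_bracket_def by (auto intro!: sum.cong)

lemma der_map_zero: "der_map p \<phi> C 0 = 0"
  by (rule ext) (simp add: der_map_def)

lemma der_map_commutator:
  assumes "p \<ge> 1"
  shows "der_map p \<phi> C (der_map p \<phi> D x) m - der_map p \<phi> D (der_map p \<phi> C x) m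
       = der_map p \<phi> (coefs_bracket p C D) x m"
proof (cases "m \<in> {1..2*p}")
  case False
  then show ?thesis using assms by (simp add: der_map_outside)
next
  case True
  then show ?thesis
  proof (cases rule: F_index_cases)
    case 1
    then show ?thesis
      by simp (simp add: algebra_simps sum.distrib sum_distrib_left sum_distrib_right sum_subtractf)
  next
    case (3 k)
    then show ?thesis by simp (simp add: algebra_simps)
  next
    case (4 k)
    then show ?thesis by simp (simp add: algebra_simps)
  qed simp
qed

lemma der_of_commutator:
  assumes "p \<ge> 1"
  shows "comm_bracket (der_of p \<phi> C) (der_of p \<phi> D) = der_of p \<phi> (coefs_bracket p C D)"
proof
  fix x
  show "comm_bracket (der_of p \<phi> C) (der_of p \<phi> D) x = der_of p \<phi> (coefs_bracket p C D) x"
  proof (cases "x \<in> Fcarrier p")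
    case True
    have "der_map p \<phi> C (der_map p \<phi> D x) - der_map p \<phi> D (der_map p \<phi> C x)
        = der_map p \<phi> (coefs_bracket p C D) x"
      by (rule ext) (simp add: der_map_commutator[OF assms])
    then show ?thesis
      using True assms by (simp add: comm_bracket_def der_of_def der_map_in_Fcarrier)
  qed (simp add: comm_bracket_def der_of_def der_map_zero)
qed

lemma der_of_add: "der_of p \<phi> C + der_of p \<phi> D = der_of p \<phi> (coefs_add C D)"
proof
  fix x
  have "der_map p \<phi> C x + der_map p \<phi> D x = der_map p \<phi> (coefs_add C D) x"
    by (rule ext) (simp add: der_map_def coefs_add_def sum.distrib algebra_simps)
  then show "(der_of p \<phi> C + der_of p \<phi> D) x = der_of p \<phi> (coefs_add C D) x"
    by (simp add: der_of_def)
qed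

lemma der_of_scale: "fun_sc vsc c (der_of p \<phi> C) = der_of p \<phi> (coefs_scale c C)"
proof
  fix x
  have "vsc c (der_map p \<phi> C x) = der_map p \<phi> (coefs_scale c C) x"
    by (rule ext) (simp add: der_map_def coefs_scale_def vsc_def sum_distrib_left algebra_simps)
  then show "fun_sc vsc c (der_of p \<phi> C) x = der_of p \<phi> (coefs_scale c C) x"
    by (simp add: der_of_def fun_sc_def vsc_def zero_fun_def)
qed

lemma der_of_zero: "der_of p \<phi> coefs_zero = 0"
proof -
  have "der_map p \<phi> coefs_zero x = 0" for x
    by (rule ext) (simp add: der_map_def coefs_zero_def)
  then show ?thesis by (auto simp: der_of_def fun_eq_iff)
qed

lemma DerF_zero: "p \<ge> 1 \<Longrightarrow> 0 \<in> DerF p \<phi>"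
  using der_of_in_DerF[of p \<phi> coefs_zero] by (simp add: der_of_zero)

lemma coefs_of_der_of: "p \<ge> 1 \<Longrightarrow> coefs_eq p (coefs_of (der_of p \<phi> C)) C"
  unfolding coefs_eq_def coefs_of_def using unitv_in_Fcarrier[of _ p]
  by (auto simp: der_of_def unitv_apply)

lemma der_of_cong:
  assumes "coefs_eq p C D"
  shows "der_of p \<phi> C = der_of p \<phi> D"
proof -
  have "der_map p \<phi> C x m = der_map p \<phi> D x m" for x m
  proof -
    have odd: "coef_b C ((m-1) div 2) = coef_b D ((m-1) div 2) \<and> coef_e C ((m-1) div 2) = coef_e D ((m-1) div 2)"
      if "3 \<le> m \<and> m \<le> 2*p \<and> odd m"
    proof -
      from that have "(m-1) div 2 \<in> {1..p-1}" by auto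
      then show ?thesis using coefs_eqD(3,5)[OF assms] by blast
    qed
    have even: "coef_b C ((m-2) div 2) = coef_b D ((m-2) div 2) \<and> coef_d C ((m-2) div 2) = coef_d D ((m-2) div 2)"
      if "4 \<le> m \<and> m \<le> 2*p \<and> even m"
    proof -
      from that have "(m-2) div 2 \<in> {1..p-1}" by auto
      then show ?thesis using coefs_eqD(3,4)[OF assms] by blast
    qed
    have "(\<Sum>k\<in>{1..p-1}. coef_d C k * x (2*k+1) + coef_e C k * x (2*k+2))
        = (\<Sum>k\<in>{1..p-1}. coef_d D k * x (2*k+1) + coef_e D k * x (2*k+2))"
      using assms unfolding coefs_eq_def by (auto intro!: sum.cong)
    with odd even show ?thesis
      using coefs_eqD(1,2)[OF assms] unfolding der_map_def by simp
  qed
  then show ?thesis unfolding der_of_def by presburger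
qed

lemma der_of_eq_iff: "p \<ge> 1 \<Longrightarrow> der_of p \<phi> C = der_of p \<phi> D \<longleftrightarrow> coefs_eq p C D"
  by (metis der_of_cong coefs_of_der_of coefs_eq_sym coefs_eq_trans)

lemma coefs_of_add: "coefs_of (X + Y) = coefs_add (coefs_of X) (coefs_of Y)"
  by (simp add: coefs_of_def coefs_add_def)

lemma coefs_of_scale: "coefs_of (fun_sc vsc c X) = coefs_scale c (coefs_of X)"
  by (simp add: coefs_of_def coefs_scale_def fun_sc_def vsc_def)

lemma DerF_isomorphic:
  assumes p: "p \<ge> 1" and generic: "\<not> in_Omega1 p \<phi>" "\<not> in_Omega1 p \<phi>'"
  shows "lie_isomorphic (DerF p \<phi>) comm_bracket (fun_sc vsc) (DerF p \<phi>') comm_bracket (fun_sc vsc)"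
  unfolding lie_isomorphic_def
proof (intro exI conjI ballI allI)
  let ?f = "\<lambda>X. der_of p \<phi>' (coefs_of X)"
  have char: "X = der_of p \<psi> (coefs_of X)" if "X \<in> DerF p \<psi>" "\<not> in_Omega1 p \<psi>" for X \<psi>
    using DerF_eq_der_of_coefs[OF that(1) p that(2)] .
  have transfer: "?f (der_of p \<phi> C) = der_of p \<phi>' C" for C
    by (rule der_of_cong[OF coefs_of_der_of[OF p]])
  show "bij_betw ?f (DerF p \<phi>) (DerF p \<phi>')"
    unfolding bij_betw_def
  proof
    show "inj_on ?f (DerF p \<phi>)"
    proof
      fix X Y assume "X \<in> DerF p \<phi>" "Y \<in> DerF p \<phi>" "?f X = ?f Y"
      then show "X = Y"
        using char[of X \<phi>] char[of Y \<phi>] generic(1) der_of_eq_iff[OF p] der_of_cong by metis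
    qed
    show "?f ` DerF p \<phi> = DerF p \<phi>'"
    proof
      show "?f ` DerF p \<phi> \<subseteq> DerF p \<phi>'"
        using der_of_in_DerF[OF p] by blast
      show "DerF p \<phi>' \<subseteq> ?f ` DerF p \<phi>"
      proof
        fix Y assume "Y \<in> DerF p \<phi>'"
        then have "Y = ?f (der_of p \<phi> (coefs_of Y))"
          using char[of Y \<phi>'] generic(2) transfer by simp
        then show "Y \<in> ?f ` DerF p \<phi>"
          using der_of_in_DerF[OF p] by blast
      qed
    qed
  qed
  fix X Y assume X: "X \<in> DerF p \<phi>" and Y: "Y \<in> DerF p \<phi>"
  show "?f (X + Y) = ?f X + ?f Y"
    by (simp add: coefs_of_add der_of_add)
  have "comm_bracket X Y = der_of p \<phi> (coefs_bracket p (coefs_of X) (coefs_of Y))"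
    using char[OF X generic(1)] char[OF Y generic(1)] der_of_commutator[OF p] by metis
  then show "?f (comm_bracket X Y) = comm_bracket (?f X) (?f Y)"
    by (simp add: transfer der_of_commutator[OF p])
next
  fix c X
  show "der_of p \<phi>' (coefs_of (fun_sc vsc c X)) = fun_sc vsc c (der_of p \<phi>' (coefs_of X))"
    by (simp add: coefs_of_scale der_of_scale)
qed

section \<open>Derived series and center\<close>

lemma cspan_subset:
  fixes sc :: "complex \<Rightarrow> 'a::ab_group_add \<Rightarrow> 'a"
  assumes "S \<subseteq> M" "0 \<in> M" "\<And>x y. x \<in> M \<Longrightarrow> y \<in> M \<Longrightarrow> x + y \<in> M" "\<And>c x. x \<in> M \<Longrightarrow> sc c x \<in> M"
  shows "cspan sc S \<subseteq> M"
proof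
  fix x assume "x \<in> cspan sc S"
  then obtain n :: nat and c v where v: "\<forall>i<n. v i \<in> S" and x: "x = (\<Sum>i<n. sc (c i) (v i))"
    unfolding cspan_def by blast
  have "(\<Sum>i<m. sc (c i) (v i)) \<in> M" if "m \<le> n" for m
    using that
  proof (induction m)
    case (Suc m)
    then have "v m \<in> M" using v assms(1) by auto
    then show ?case using Suc assms(3,4) by simp
  qed (simp add: assms(2))
  then show "x \<in> M" using x by simp
qed

lemma subset_cspan:
  assumes "\<And>x. sc 1 x = x"
  shows "S \<subseteq> cspan sc S"
proof
  fix x assume "x \<in> S"
  then show "x \<in> cspan sc S"
    unfolding cspan_def
    by (intro CollectI exI[of _ 1] exI[of _ "\<lambda>_. 1"] exI[of _ "\<lambda>_. x"]) (simp add: assms)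
qed

lemma zero_in_cspan: "0 \<in> cspan sc S"
  unfolding cspan_def by (intro CollectI exI[of _ 0]) simp

lemma fun_sc_vsc_one: "fun_sc vsc 1 X = X"
  by (simp add: fun_sc_def vsc_def)

lemma cspan_der_of_subset:
  assumes "S \<subseteq> {der_of p \<phi> C | C. Q C}" and "Q coefs_zero"
    and "\<And>C D. Q C \<Longrightarrow> Q D \<Longrightarrow> Q (coefs_add C D)" and "\<And>c C. Q C \<Longrightarrow> Q (coefs_scale c C)"
  shows "cspan (fun_sc vsc) S \<subseteq> {der_of p \<phi> C | C. Q C}"
proof (rule cspan_subset[OF assms(1)])
  have "0 = der_of p \<phi> coefs_zero"
    by (simp add: der_of_zero)
  with assms(2) show "0 \<in> {der_of p \<phi> C | C. Q C}"
    by blast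
  fix x y c
  assume "x \<in> {der_of p \<phi> C | C. Q C}"
  then obtain C where C: "x = der_of p \<phi> C" "Q C" by blast
  then show "fun_sc vsc c x \<in> {der_of p \<phi> C | C. Q C}"
    using assms(4) der_of_scale by blast
  assume "y \<in> {der_of p \<phi> C | C. Q C}"
  then obtain D where "y = der_of p \<phi> D" "Q D" by blast
  with C show "x + y \<in> {der_of p \<phi> C | C. Q C}"
    using assms(3) der_of_add by blast
qed

definition nil_coefs :: "nat \<Rightarrow> der_coefs \<Rightarrow> bool" where
  "nil_coefs p C \<longleftrightarrow> coef_a C = 0 \<and> (\<forall>k\<in>{1..p-1}. coef_b C k = 0)"

definition alpha_coefs :: "nat \<Rightarrow> der_coefs \<Rightarrow> bool" where
  "alpha_coefs p C \<longleftrightarrow> nil_coefs p C \<and> (\<forall>k\<in>{1..p-1}. coef_d C k = 0 \<and> coef_e C k = 0)"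

lemma DerF_center_trivial:
  assumes p: "p \<ge> 1" and generic: "\<not> in_Omega1 p \<phi>"
  shows "lie_center (DerF p \<phi>) comm_bracket = {0}"
proof
  have "comm_bracket 0 x = 0" if "x \<in> DerF p \<phi>" for x
    using derivation_zero[OF DerF_derivation[OF that]] by (simp add: comm_bracket_def fun_eq_iff)
  then show "{0} \<subseteq> lie_center (DerF p \<phi>) comm_bracket"
    unfolding lie_center_def using DerF_zero[OF p] by auto
  show "lie_center (DerF p \<phi>) comm_bracket \<subseteq> {0}"
  proof
    fix z assume "z \<in> lie_center (DerF p \<phi>) comm_bracket"
    then have z: "z \<in> DerF p \<phi>" and central: "\<And>x. x \<in> DerF p \<phi> \<Longrightarrow> comm_bracket z x = 0"
      unfolding lie_center_def by auto
    define C where "C = coefs_of z"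
    have zC: "z = der_of p \<phi> C"
      unfolding C_def by (rule DerF_eq_der_of_coefs[OF z p generic])
    have commutes: "coefs_eq p (coefs_bracket p C D) coefs_zero" for D
    proof -
      have "der_of p \<phi> (coefs_bracket p C D) = der_of p \<phi> coefs_zero"
        using central[OF der_of_in_DerF[OF p]] zC der_of_commutator[OF p] der_of_zero by metis
      then show ?thesis using der_of_eq_iff[OF p] by blast
    qed
    from commutes[of "Coefs 1 0 (\<lambda>_. 2) (\<lambda>_. 0) (\<lambda>_. 0)"]
    have "coef_\<alpha> C = 0" "\<forall>k\<in>{1..p-1}. coef_d C k = 0 \<and> coef_e C k = 0"
      by (auto simp: coefs_eq_def coefs_zero_def)
    moreover from this commutes[of "Coefs 0 1 (\<lambda>_. 0) (\<lambda>_. 0) (\<lambda>_. 0)"]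
    have "coef_a C = 0"
      by (auto simp: coefs_eq_def coefs_zero_def)
    moreover from commutes[of "Coefs 0 0 (\<lambda>_. 0) (\<lambda>_. 0) (\<lambda>_. 1)"]
    have "\<forall>k\<in>{1..p-1}. coef_b C k = 0"
      by (auto simp: coefs_eq_def coefs_zero_def)
    ultimately have "coefs_eq p C coefs_zero"
      by (simp add: coefs_eq_def coefs_zero_def)
    then show "z \<in> {0}"
      using zC der_of_cong der_of_zero by simp
  qed
qed

locale generic_F =
  fixes p :: nat and \<phi> :: "nat \<Rightarrow> complex"
  assumes two_le_p: "2 \<le> p" and generic: "\<not> in_Omega1 p \<phi>"
begin

lemma one_le_p: "1 \<le> p"
  using two_le_p by simp

abbreviation derived :: "nat \<Rightarrow> ((nat \<Rightarrow> complex) \<Rightarrow> nat \<Rightarrow> complex) set" where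
  "derived \<equiv> derived_series (DerF p \<phi>) comm_bracket (fun_sc vsc)"

lemma bracket_as_der_of:
  assumes "coefs_eq p (coefs_bracket p C D) E"
  shows "der_of p \<phi> E = comm_bracket (der_of p \<phi> C) (der_of p \<phi> D)"
  using der_of_cong[OF assms] der_of_commutator[OF one_le_p] by metis

lemma derived_one: "derived 1 = {der_of p \<phi> C | C. nil_coefs p C}"
proof -
  let ?S = "{comm_bracket x y | x y. x \<in> DerF p \<phi> \<and> y \<in> DerF p \<phi>}"
  have "?S \<subseteq> {der_of p \<phi> C | C. nil_coefs p C}"
  proof
    fix z assume "z \<in> ?S"
    then obtain x y where "z = comm_bracket x y" "x \<in> DerF p \<phi>" "y \<in> DerF p \<phi>" by blast
    then have "z = der_of p \<phi> (coefs_bracket p (coefs_of x) (coefs_of y))"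
      using DerF_eq_der_of_coefs[OF _ one_le_p generic] der_of_commutator[OF one_le_p] by metis
    then show "z \<in> {der_of p \<phi> C | C. nil_coefs p C}"
      by (auto simp: nil_coefs_def)
  qed
  then have sub: "cspan (fun_sc vsc) ?S \<subseteq> {der_of p \<phi> C | C. nil_coefs p C}"
    by (rule cspan_der_of_subset) (auto simp: nil_coefs_def coefs_zero_def coefs_add_def coefs_scale_def)
  have "{der_of p \<phi> C | C. nil_coefs p C} \<subseteq> ?S"
  proof
    fix z assume "z \<in> {der_of p \<phi> C | C. nil_coefs p C}"
    then obtain C where z: "z = der_of p \<phi> C" and C: "nil_coefs p C" by blast
    \<comment> \<open>ad R scales the alpha-, d- and e-coefficients by 1, -1 and 2.\<close>
    define R where "R = Coefs 1 0 (\<lambda>_. 2) (\<lambda>_. 0) (\<lambda>_. 0)"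
    define D where "D = Coefs 0 (coef_\<alpha> C) (\<lambda>_. 0) (\<lambda>k. - coef_d C k) (\<lambda>k. coef_e C k / 2)"
    have "coefs_eq p (coefs_bracket p R D) C"
      using C by (auto simp: coefs_eq_def nil_coefs_def R_def D_def)
    then show "z \<in> ?S"
      using z bracket_as_der_of der_of_in_DerF[OF one_le_p] by blast
  qed
  then have sup: "{der_of p \<phi> C | C. nil_coefs p C} \<subseteq> cspan (fun_sc vsc) ?S"
    by (rule order_trans[OF _ subset_cspan[of "fun_sc vsc", OF fun_sc_vsc_one]])
  have "derived 1 = cspan (fun_sc vsc) ?S"
    by (simp add: One_nat_def)
  with sub sup show ?thesis
    by blast
qed

lemma derived_two: "derived 2 = {der_of p \<phi> C | C. alpha_coefs p C}"
proof -
  let ?N = "{der_of p \<phi> C | C. nil_coefs p C}"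
  let ?S = "{comm_bracket x y | x y. x \<in> ?N \<and> y \<in> ?N}"
  have "?S \<subseteq> {der_of p \<phi> C | C. alpha_coefs p C}"
  proof
    fix z assume "z \<in> ?S"
    then obtain C D where "z = comm_bracket (der_of p \<phi> C) (der_of p \<phi> D)" "nil_coefs p C" "nil_coefs p D"
      by blast
    then show "z \<in> {der_of p \<phi> C | C. alpha_coefs p C}"
      by (auto simp: der_of_commutator[OF one_le_p] alpha_coefs_def nil_coefs_def)
  qed
  then have sub: "cspan (fun_sc vsc) ?S \<subseteq> {der_of p \<phi> C | C. alpha_coefs p C}"
    by (rule cspan_der_of_subset)
      (auto simp: alpha_coefs_def nil_coefs_def coefs_zero_def coefs_add_def coefs_scale_def)
  have "{der_of p \<phi> C | C. alpha_coefs p C} \<subseteq> ?S"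
  proof
    fix z assume "z \<in> {der_of p \<phi> C | C. alpha_coefs p C}"
    then obtain C where z: "z = der_of p \<phi> C" and C: "alpha_coefs p C" by blast
    \<comment> \<open>This is where p \<ge> 2 is needed: the index 1 must lie in {1..p-1}.\<close>
    define Y where "Y = Coefs 0 0 (\<lambda>_. 0) (unitv 1) (\<lambda>_. 0)"
    define X where "X = Coefs 0 0 (\<lambda>_. 0) (\<lambda>_. 0) (\<lambda>k. if k = 1 then coef_\<alpha> C else 0)"
    have "coefs_eq p (coefs_bracket p Y X) C"
      using C two_le_p by (auto simp: coefs_eq_def alpha_coefs_def nil_coefs_def Y_def X_def unitv_def)
    moreover have "nil_coefs p Y" "nil_coefs p X"
      by (simp_all add: nil_coefs_def Y_def X_def)
    ultimately show "z \<in> ?S"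
      using z bracket_as_der_of by blast
  qed
  then have sup: "{der_of p \<phi> C | C. alpha_coefs p C} \<subseteq> cspan (fun_sc vsc) ?S"
    by (rule order_trans[OF _ subset_cspan[of "fun_sc vsc", OF fun_sc_vsc_one]])
  have "derived 2 = cspan (fun_sc vsc) ?S"
    using derived_one[unfolded One_nat_def] by (simp add: numeral_2_eq_2)
  with sub sup show ?thesis
    by blast
qed

lemma derived_three: "derived 3 = {0}"
proof -
  let ?A = "{der_of p \<phi> C | C. alpha_coefs p C}"
  let ?S = "{comm_bracket x y | x y. x \<in> ?A \<and> y \<in> ?A}"
  have "?S \<subseteq> {der_of p \<phi> C | C. C = coefs_zero}"
  proof
    fix z assume "z \<in> ?S"
    then obtain C D where "z = comm_bracket (der_of p \<phi> C) (der_of p \<phi> D)" "alpha_coefs p C" "alpha_coefs p D"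
      by blast
    then have "z = der_of p \<phi> coefs_zero"
      by (auto simp: der_of_commutator[OF one_le_p] der_of_eq_iff[OF one_le_p] alpha_coefs_def nil_coefs_def
          coefs_eq_def coefs_zero_def)
    then show "z \<in> {der_of p \<phi> C | C. C = coefs_zero}" by blast
  qed
  then have "cspan (fun_sc vsc) ?S \<subseteq> {der_of p \<phi> C | C. C = coefs_zero}"
    by (rule cspan_der_of_subset) (auto simp: coefs_zero_def coefs_add_def coefs_scale_def)
  then have "cspan (fun_sc vsc) ?S \<subseteq> {0}"
    by (simp add: der_of_zero)
  moreover have "derived 3 = cspan (fun_sc vsc) ?S"
    using derived_two[unfolded numeral_2_eq_2] by (simp add: numeral_3_eq_3)
  ultimately show ?thesis
    using zero_in_cspan by blast
qed

lemma DerF_derived_length: "has_derived_length (DerF p \<phi>) comm_bracket (fun_sc vsc) 3"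
proof -
  define Z where "Z = Coefs 0 1 (\<lambda>_. 0) (\<lambda>_. 0) (\<lambda>_. 0)"
  have "der_of p \<phi> Z \<in> derived 2"
    unfolding derived_two by (auto simp: alpha_coefs_def nil_coefs_def Z_def)
  moreover have "der_of p \<phi> Z (unitv 2) 1 = 1"
    using one_le_p by (simp add: der_of_def Z_def unitv_apply)
  ultimately have "derived 2 \<noteq> {0}"
    by auto
  then show ?thesis
    unfolding has_derived_length_def using derived_three by simp
qed

end

section \<open>Every derivation of Der(F_phi) is inner\<close>

definition coefs_sum :: "(nat \<Rightarrow> der_coefs) \<Rightarrow> nat set \<Rightarrow> der_coefs" where
  "coefs_sum f S = Coefs (\<Sum>k\<in>S. coef_a (f k)) (\<Sum>k\<in>S. coef_\<alpha> (f k))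
     (\<lambda>j. \<Sum>k\<in>S. coef_b (f k) j) (\<lambda>j. \<Sum>k\<in>S. coef_d (f k) j) (\<lambda>j. \<Sum>k\<in>S. coef_e (f k) j)"

lemma coefs_sum_empty: "coefs_sum f {} = coefs_zero"
  by (simp add: coefs_sum_def coefs_zero_def)

lemma coefs_sum_insert: "finite S \<Longrightarrow> a \<notin> S \<Longrightarrow> coefs_sum f (insert a S) = coefs_add (f a) (coefs_sum f S)"
  by (simp add: coefs_sum_def coefs_add_def)

lemma coefs_add_cong: "coefs_eq p C C' \<Longrightarrow> coefs_eq p D D' \<Longrightarrow> coefs_eq p (coefs_add C D) (coefs_add C' D')"
  and coefs_scale_cong: "coefs_eq p C C' \<Longrightarrow> coefs_eq p (coefs_scale c C) (coefs_scale c C')"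
  by (simp_all add: coefs_eq_def coefs_add_def coefs_scale_def)

lemma coefs_sum_cong: "(\<And>k. k \<in> S \<Longrightarrow> coefs_eq p (f k) (g k)) \<Longrightarrow> coefs_eq p (coefs_sum f S) (coefs_sum g S)"
  unfolding coefs_eq_def coefs_sum_def by (auto intro!: sum.cong)

lemma coefs_bracket_add_right: "coefs_bracket p A (coefs_add C D) = coefs_add (coefs_bracket p A C) (coefs_bracket p A D)"
  by (simp add: coefs_bracket_def coefs_add_def algebra_simps sum.distrib sum_subtractf)

lemma coefs_bracket_scale_right: "coefs_bracket p A (coefs_scale c C) = coefs_scale c (coefs_bracket p A C)"
  by (simp add: coefs_bracket_def coefs_scale_def algebra_simps sum_distrib_left sum_subtractf)

lemma coefs_bracket_zero_right: "coefs_bracket p A coefs_zero = coefs_zero"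
  by (simp add: coefs_bracket_def coefs_zero_def)

lemma coefs_bracket_sum_right:
  "finite S \<Longrightarrow> coefs_bracket p A (coefs_sum f S) = coefs_sum (\<lambda>k. coefs_bracket p A (f k)) S"
  by (induction S rule: finite_induct)
    (simp_all add: coefs_sum_empty coefs_sum_insert coefs_bracket_zero_right coefs_bracket_add_right)

definition basis_a :: der_coefs where "basis_a = Coefs 1 0 (\<lambda>_. 0) (\<lambda>_. 0) (\<lambda>_. 0)"
definition basis_\<alpha> :: der_coefs where "basis_\<alpha> = Coefs 0 1 (\<lambda>_. 0) (\<lambda>_. 0) (\<lambda>_. 0)"
definition basis_b :: "nat \<Rightarrow> der_coefs" where "basis_b j = Coefs 0 0 (unitv j) (\<lambda>_. 0) (\<lambda>_. 0)"
definition basis_d :: "nat \<Rightarrow> der_coefs" where "basis_d j = Coefs 0 0 (\<lambda>_. 0) (unitv j) (\<lambda>_. 0)"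
definition basis_e :: "nat \<Rightarrow> der_coefs" where "basis_e j = Coefs 0 0 (\<lambda>_. 0) (\<lambda>_. 0) (unitv j)"

lemmas basis_defs = basis_a_def basis_\<alpha>_def basis_b_def basis_d_def basis_e_def

lemma basis_sel[simp]:
  "coef_a basis_a = 1" "coef_\<alpha> basis_a = 0" "coef_b basis_a k = 0" "coef_d basis_a k = 0" "coef_e basis_a k = 0"
  "coef_a basis_\<alpha> = 0" "coef_\<alpha> basis_\<alpha> = 1" "coef_b basis_\<alpha> k = 0" "coef_d basis_\<alpha> k = 0" "coef_e basis_\<alpha> k = 0"
  "coef_a (basis_b j) = 0" "coef_\<alpha> (basis_b j) = 0" "coef_b (basis_b j) k = (if k = j then 1 else 0)"
  "coef_d (basis_b j) k = 0" "coef_e (basis_b j) k = 0"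
  "coef_a (basis_d j) = 0" "coef_\<alpha> (basis_d j) = 0" "coef_b (basis_d j) k = 0"
  "coef_d (basis_d j) k = (if k = j then 1 else 0)" "coef_e (basis_d j) k = 0"
  "coef_a (basis_e j) = 0" "coef_\<alpha> (basis_e j) = 0" "coef_b (basis_e j) k = 0" "coef_d (basis_e j) k = 0"
  "coef_e (basis_e j) k = (if k = j then 1 else 0)"
  by (simp_all add: basis_defs unitv_def)

definition basis_expansion :: "nat \<Rightarrow> der_coefs \<Rightarrow> der_coefs" where
  "basis_expansion p C =
     coefs_add (coefs_scale (coef_a C) basis_a) (coefs_add (coefs_scale (coef_\<alpha> C) basis_\<alpha>)
       (coefs_sum (\<lambda>k. coefs_add (coefs_scale (coef_b C k) (basis_b k))
          (coefs_add (coefs_scale (coef_d C k) (basis_d k)) (coefs_scale (coef_e C k) (basis_e k)))) {1..p-1}))"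

lemma coefs_eq_basis_expansion: "coefs_eq p C (basis_expansion p C)"
  unfolding coefs_eq_def basis_expansion_def
  by (simp add: coefs_add_def coefs_scale_def coefs_sum_def basis_defs unitv_def)

locale derivation_of_DerF = generic_F +
  fixes \<Delta> :: "((nat \<Rightarrow> complex) \<Rightarrow> nat \<Rightarrow> complex) \<Rightarrow> (nat \<Rightarrow> complex) \<Rightarrow> nat \<Rightarrow> complex"
  assumes derivation: "\<Delta> \<in> derivations (DerF p \<phi>) comm_bracket (fun_sc vsc)"
begin

definition delta_coefs :: "der_coefs \<Rightarrow> der_coefs" where
  "delta_coefs C = coefs_of (\<Delta> (der_of p \<phi> C))"

lemma der_of_in: "der_of p \<phi> C \<in> DerF p \<phi>"
  using der_of_in_DerF[OF one_le_p] .

lemma Delta_der_of: "\<Delta> (der_of p \<phi> C) = der_of p \<phi> (delta_coefs C)"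
proof -
  have "\<Delta> (der_of p \<phi> C) \<in> DerF p \<phi>"
    using derivation der_of_in unfolding derivations_def by blast
  then show ?thesis
    unfolding delta_coefs_def by (rule DerF_eq_der_of_coefs[OF _ one_le_p generic])
qed

lemma delta_coefs_add: "delta_coefs (coefs_add C D) = coefs_add (delta_coefs C) (delta_coefs D)"
  using derivation der_of_in unfolding delta_coefs_def der_of_add[symmetric] derivations_def
  by (simp add: coefs_of_add)

lemma delta_coefs_scale: "delta_coefs (coefs_scale c C) = coefs_scale c (delta_coefs C)"
  using derivation der_of_in unfolding delta_coefs_def der_of_scale[symmetric] derivations_def
  by (simp add: coefs_of_scale)

lemma delta_coefs_cong: "coefs_eq p C D \<Longrightarrow> delta_coefs C = delta_coefs D"
  unfolding delta_coefs_def by (metis der_of_cong)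

lemma delta_coefs_zero: "delta_coefs coefs_zero = coefs_zero"
proof -
  have "0 \<in> DerF p \<phi>"
    by (rule DerF_zero[OF one_le_p])
  then have "\<Delta> (0 + 0) = \<Delta> 0 + \<Delta> 0"
    using derivation unfolding derivations_def by blast
  then have "\<Delta> 0 = 0"
    by simp
  then show ?thesis
    unfolding delta_coefs_def der_of_zero by (simp add: coefs_of_def coefs_zero_def)
qed

lemma delta_coefs_sum: "finite S \<Longrightarrow> delta_coefs (coefs_sum f S) = coefs_sum (\<lambda>k. delta_coefs (f k)) S"
  by (induction S rule: finite_induct) (simp_all add: coefs_sum_empty coefs_sum_insert delta_coefs_zero delta_coefs_add)

lemma delta_coefs_leibniz:
  assumes "coefs_eq p (coefs_bracket p U V) W"
  shows "coefs_eq p (delta_coefs W) (coefs_add (coefs_bracket p (delta_coefs U) V) (coefs_bracket p U (delta_coefs V)))"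
proof -
  have "der_of p \<phi> (delta_coefs W) = \<Delta> (comm_bracket (der_of p \<phi> U) (der_of p \<phi> V))"
    by (simp add: Delta_der_of bracket_as_der_of[OF assms, symmetric])
  also have "\<dots> = comm_bracket (der_of p \<phi> (delta_coefs U)) (der_of p \<phi> V)
      + comm_bracket (der_of p \<phi> U) (der_of p \<phi> (delta_coefs V))"
    using derivation der_of_in unfolding derivations_def by (simp add: Delta_der_of)
  also have "\<dots> = der_of p \<phi> (coefs_add (coefs_bracket p (delta_coefs U) V) (coefs_bracket p U (delta_coefs V)))"
    by (simp add: der_of_commutator[OF one_le_p] der_of_add)
  finally show ?thesis
    using der_of_eq_iff[OF one_le_p] by blast
qed

text \<open>Each of the following lemmas applies the Leibniz rule to one bracket relation between
  basis elements and reads off some coefficients.\<close>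

lemma delta_rel_a_\<alpha>:
  "coef_a (delta_coefs basis_a) = 0" "coef_a (delta_coefs basis_\<alpha>) = 0"
  "k \<in> {1..p-1} \<Longrightarrow> coef_b (delta_coefs basis_\<alpha>) k = 0"
  "k \<in> {1..p-1} \<Longrightarrow> coef_e (delta_coefs basis_\<alpha>) k = 0"
proof -
  have "coefs_eq p (coefs_bracket p basis_a basis_\<alpha>) basis_\<alpha>"
    by (simp add: basis_defs coefs_eq_def unitv_def)
  note rel = coefs_eqD[OF delta_coefs_leibniz[OF this], simplified]
  show "coef_a (delta_coefs basis_a) = 0" using rel(2) by simp
  show "coef_a (delta_coefs basis_\<alpha>) = 0" using rel(1) by simp
  show "k \<in> {1..p-1} \<Longrightarrow> coef_b (delta_coefs basis_\<alpha>) k = 0" using rel(3) by simp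
  show "k \<in> {1..p-1} \<Longrightarrow> coef_e (delta_coefs basis_\<alpha>) k = 0" using rel(5) by simp
qed

lemma delta_rel_b_\<alpha>:
  "i \<in> {1..p-1} \<Longrightarrow> coef_a (delta_coefs (basis_b i)) = 0 \<and> coef_d (delta_coefs basis_\<alpha>) i = 0"
proof -
  assume i: "i \<in> {1..p-1}"
  have "coefs_eq p (coefs_bracket p (basis_b i) basis_\<alpha>) coefs_zero"
    by (simp add: basis_defs coefs_eq_def coefs_zero_def unitv_def)
  note rel = coefs_eqD[OF delta_coefs_leibniz[OF this, unfolded delta_coefs_zero], simplified]
  show ?thesis using rel(2) rel(4)[of i] i by (simp add: coefs_zero_def)
qed

lemma delta_rel_a_e:
  "j \<in> {1..p-1} \<Longrightarrow> coef_\<alpha> (delta_coefs (basis_e j)) = - coef_d (delta_coefs basis_a) j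
     \<and> coef_b (delta_coefs basis_a) j = 0 \<and> (\<forall>k\<in>{1..p-1}. coef_d (delta_coefs (basis_e j)) k = 0)"
proof -
  assume j: "j \<in> {1..p-1}"
  have "coefs_eq p (coefs_bracket p basis_a (basis_e j)) coefs_zero"
    by (simp add: basis_defs coefs_eq_def coefs_zero_def unitv_def)
  note rel = coefs_eqD[OF delta_coefs_leibniz[OF this, unfolded delta_coefs_zero], simplified]
  show ?thesis using rel(2) rel(5)[of j] rel(4) j by (simp add: coefs_zero_def add_eq_0_iff)
qed

lemma delta_rel_a_d:
  "j \<in> {1..p-1} \<Longrightarrow> coef_e (delta_coefs basis_a) j = 0 \<and> coef_a (delta_coefs (basis_d j)) = 0
     \<and> (\<forall>k\<in>{1..p-1}. coef_b (delta_coefs (basis_d j)) k = 0 \<and> coef_e (delta_coefs (basis_d j)) k = 0)"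
proof -
  assume j: "j \<in> {1..p-1}"
  have "coefs_eq p (coefs_bracket p basis_a (basis_d j)) (basis_d j)"
    by (simp add: basis_defs coefs_eq_def unitv_def)
  note rel = coefs_eqD[OF delta_coefs_leibniz[OF this], simplified]
  show ?thesis using rel(1,2) rel(3) rel(5) j by simp
qed

lemma delta_rel_b_a:
  "i \<in> {1..p-1} \<Longrightarrow> coef_\<alpha> (delta_coefs (basis_b i)) = 0
     \<and> (\<forall>k\<in>{1..p-1}. coef_d (delta_coefs (basis_b i)) k = (if k = i then - coef_d (delta_coefs basis_a) k else 0))"
proof -
  assume i: "i \<in> {1..p-1}"
  have "coefs_eq p (coefs_bracket p (basis_b i) basis_a) coefs_zero"
    by (simp add: basis_defs coefs_eq_def coefs_zero_def unitv_def)
  note rel = coefs_eqD[OF delta_coefs_leibniz[OF this, unfolded delta_coefs_zero], simplified]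
  have "coef_d (delta_coefs (basis_b i)) k = (if k = i then - coef_d (delta_coefs basis_a) k else 0)"
    if k: "k \<in> {1..p-1}" for k
    using rel(4)[of k] k by (cases "k = i") (simp_all add: coefs_zero_def add_eq_0_iff)
  then show ?thesis using rel(2) by (simp add: coefs_zero_def add_eq_0_iff)
qed

lemma delta_rel_b_b:
  "i \<in> {1..p-1} \<Longrightarrow> l \<in> {1..p-1} \<Longrightarrow> i \<noteq> l \<Longrightarrow> coef_e (delta_coefs (basis_b i)) l = 0"
proof -
  assume i: "i \<in> {1..p-1}" and l: "l \<in> {1..p-1}" and il: "i \<noteq> l"
  have "coefs_eq p (coefs_bracket p (basis_b i) (basis_b l)) coefs_zero"
    by (simp add: basis_defs coefs_eq_def coefs_zero_def unitv_def)
  note rel = coefs_eqD[OF delta_coefs_leibniz[OF this, unfolded delta_coefs_zero], simplified]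
  show ?thesis using rel(5)[of l] l il by (simp add: coefs_zero_def)
qed

lemma delta_rel_b_e:
  "i \<in> {1..p-1} \<Longrightarrow> j \<in> {1..p-1} \<Longrightarrow> i \<noteq> j \<Longrightarrow>
     coef_b (delta_coefs (basis_b i)) j = 0 \<and> coef_e (delta_coefs (basis_e j)) i = 0"
proof -
  assume i: "i \<in> {1..p-1}" and j: "j \<in> {1..p-1}" and ij: "i \<noteq> j"
  have "coefs_eq p (coefs_bracket p (basis_b i) (basis_e j)) coefs_zero"
    using ij by (simp add: basis_defs coefs_eq_def coefs_zero_def unitv_def)
  note rel = coefs_eqD[OF delta_coefs_leibniz[OF this, unfolded delta_coefs_zero], simplified]
  show ?thesis using rel(5)[of j] rel(5)[of i] i j ij by (simp add: coefs_zero_def)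
qed

lemma delta_rel_b_e_diag:
  "j \<in> {1..p-1} \<Longrightarrow> coef_b (delta_coefs (basis_b j)) j = 0 \<and> coef_a (delta_coefs (basis_e j)) = 0
     \<and> (\<forall>k\<in>{1..p-1}. coef_b (delta_coefs (basis_e j)) k = 0)"
proof -
  assume j: "j \<in> {1..p-1}"
  have "coefs_eq p (coefs_bracket p (basis_b j) (basis_e j)) (basis_e j)"
    by (simp add: basis_defs coefs_eq_def unitv_def)
  note rel = coefs_eqD[OF delta_coefs_leibniz[OF this], simplified]
  show ?thesis using rel(5)[of j] rel(1) rel(3) j by simp
qed

lemma delta_rel_b_d:
  "i \<in> {1..p-1} \<Longrightarrow> j \<in> {1..p-1} \<Longrightarrow> i \<noteq> j \<Longrightarrow> coef_d (delta_coefs (basis_d j)) i = 0"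
proof -
  assume i: "i \<in> {1..p-1}" and j: "j \<in> {1..p-1}" and ij: "i \<noteq> j"
  have "coefs_eq p (coefs_bracket p (basis_b i) (basis_d j)) coefs_zero"
    using ij by (simp add: basis_defs coefs_eq_def coefs_zero_def unitv_def)
  note rel = coefs_eqD[OF delta_coefs_leibniz[OF this, unfolded delta_coefs_zero], simplified]
  show ?thesis using rel(4)[of i] i ij by (simp add: coefs_zero_def)
qed

lemma delta_rel_d_b_diag:
  "j \<in> {1..p-1} \<Longrightarrow> coef_\<alpha> (delta_coefs (basis_d j)) = coef_e (delta_coefs (basis_b j)) j"
proof -
  assume j: "j \<in> {1..p-1}"
  have "coefs_eq p (coefs_bracket p (basis_d j) (basis_b j)) (basis_d j)"
    by (simp add: basis_defs coefs_eq_def unitv_def)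
  note rel = coefs_eqD[OF delta_coefs_leibniz[OF this], simplified]
  show ?thesis using rel(2) j by simp
qed

lemma delta_rel_d_e:
  "j \<in> {1..p-1} \<Longrightarrow> coef_\<alpha> (delta_coefs basis_\<alpha>) = coef_d (delta_coefs (basis_d j)) j + coef_e (delta_coefs (basis_e j)) j"
proof -
  assume j: "j \<in> {1..p-1}"
  have "coefs_eq p (coefs_bracket p (basis_d j) (basis_e j)) basis_\<alpha>"
    using j by (simp add: basis_defs coefs_eq_def unitv_def)
  note rel = coefs_eqD[OF delta_coefs_leibniz[OF this], simplified]
  show ?thesis using rel(2) j by simp
qed

definition inner_coefs :: der_coefs where
  "inner_coefs = Coefs (coef_\<alpha> (delta_coefs basis_\<alpha>)) (- coef_\<alpha> (delta_coefs basis_a))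
     (\<lambda>k. coef_e (delta_coefs (basis_e k)) k) (\<lambda>k. - coef_d (delta_coefs basis_a) k)
     (\<lambda>k. - coef_e (delta_coefs (basis_b k)) k)"

lemma inner_coefs_sel[simp]:
  "coef_a inner_coefs = coef_\<alpha> (delta_coefs basis_\<alpha>)" "coef_\<alpha> inner_coefs = - coef_\<alpha> (delta_coefs basis_a)"
  "coef_b inner_coefs k = coef_e (delta_coefs (basis_e k)) k"
  "coef_d inner_coefs k = - coef_d (delta_coefs basis_a) k"
  "coef_e inner_coefs k = - coef_e (delta_coefs (basis_b k)) k"
  by (simp_all add: inner_coefs_def)

lemma delta_basis_a: "coefs_eq p (delta_coefs basis_a) (coefs_bracket p inner_coefs basis_a)"
proof (rule coefs_eqI)
  show "coef_a (delta_coefs basis_a) = coef_a (coefs_bracket p inner_coefs basis_a)"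
    using delta_rel_a_\<alpha>(1) by simp
  show "coef_\<alpha> (delta_coefs basis_a) = coef_\<alpha> (coefs_bracket p inner_coefs basis_a)"
    by simp
  show "coef_b (delta_coefs basis_a) k = coef_b (coefs_bracket p inner_coefs basis_a) k"
    if "k \<in> {1..p-1}" for k
    using delta_rel_a_e[OF that] by simp
  show "coef_d (delta_coefs basis_a) k = coef_d (coefs_bracket p inner_coefs basis_a) k" for k
    by simp
  show "coef_e (delta_coefs basis_a) k = coef_e (coefs_bracket p inner_coefs basis_a) k"
    if "k \<in> {1..p-1}" for k
    using delta_rel_a_d[OF that] by simp
qed

lemma delta_basis_\<alpha>: "coefs_eq p (delta_coefs basis_\<alpha>) (coefs_bracket p inner_coefs basis_\<alpha>)"
proof (rule coefs_eqI)
  show "coef_a (delta_coefs basis_\<alpha>) = coef_a (coefs_bracket p inner_coefs basis_\<alpha>)"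
    using delta_rel_a_\<alpha>(2) by simp
  show "coef_\<alpha> (delta_coefs basis_\<alpha>) = coef_\<alpha> (coefs_bracket p inner_coefs basis_\<alpha>)"
    by simp
  show "coef_b (delta_coefs basis_\<alpha>) k = coef_b (coefs_bracket p inner_coefs basis_\<alpha>) k"
    if "k \<in> {1..p-1}" for k
    using delta_rel_a_\<alpha>(3)[OF that] by simp
  show "coef_d (delta_coefs basis_\<alpha>) k = coef_d (coefs_bracket p inner_coefs basis_\<alpha>) k"
    if "k \<in> {1..p-1}" for k
    using delta_rel_b_\<alpha>[OF that] by simp
  show "coef_e (delta_coefs basis_\<alpha>) k = coef_e (coefs_bracket p inner_coefs basis_\<alpha>) k"
    if "k \<in> {1..p-1}" for k
    using delta_rel_a_\<alpha>(4)[OF that] by simp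
qed

lemma delta_basis_b:
  assumes j: "j \<in> {1..p-1}"
  shows "coefs_eq p (delta_coefs (basis_b j)) (coefs_bracket p inner_coefs (basis_b j))"
proof (rule coefs_eqI)
  show "coef_a (delta_coefs (basis_b j)) = coef_a (coefs_bracket p inner_coefs (basis_b j))"
    using delta_rel_b_\<alpha>[OF j] by simp
  show "coef_\<alpha> (delta_coefs (basis_b j)) = coef_\<alpha> (coefs_bracket p inner_coefs (basis_b j))"
    using delta_rel_b_a[OF j] by simp
  show "coef_b (delta_coefs (basis_b j)) k = coef_b (coefs_bracket p inner_coefs (basis_b j)) k"
    if "k \<in> {1..p-1}" for k
    using delta_rel_b_e_diag[OF j] delta_rel_b_e[OF j that] by (cases "k = j") simp_all
  show "coef_d (delta_coefs (basis_b j)) k = coef_d (coefs_bracket p inner_coefs (basis_b j)) k"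
    if "k \<in> {1..p-1}" for k
    using delta_rel_b_a[OF j] that by simp
  show "coef_e (delta_coefs (basis_b j)) k = coef_e (coefs_bracket p inner_coefs (basis_b j)) k"
    if "k \<in> {1..p-1}" for k
    using delta_rel_b_b[OF j that] by (cases "k = j") simp_all
qed

lemma delta_basis_e:
  assumes j: "j \<in> {1..p-1}"
  shows "coefs_eq p (delta_coefs (basis_e j)) (coefs_bracket p inner_coefs (basis_e j))"
proof (rule coefs_eqI)
  show "coef_a (delta_coefs (basis_e j)) = coef_a (coefs_bracket p inner_coefs (basis_e j))"
    using delta_rel_b_e_diag[OF j] by simp
  show "coef_\<alpha> (delta_coefs (basis_e j)) = coef_\<alpha> (coefs_bracket p inner_coefs (basis_e j))"
    using delta_rel_a_e[OF j] j by simp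
  show "coef_b (delta_coefs (basis_e j)) k = coef_b (coefs_bracket p inner_coefs (basis_e j)) k"
    if "k \<in> {1..p-1}" for k
    using delta_rel_b_e_diag[OF j] that by simp
  show "coef_d (delta_coefs (basis_e j)) k = coef_d (coefs_bracket p inner_coefs (basis_e j)) k"
    if "k \<in> {1..p-1}" for k
    using delta_rel_a_e[OF j] that by simp
  show "coef_e (delta_coefs (basis_e j)) k = coef_e (coefs_bracket p inner_coefs (basis_e j)) k"
    if "k \<in> {1..p-1}" for k
    using delta_rel_b_e[OF that j] by (cases "k = j") simp_all
qed

lemma delta_basis_d:
  assumes j: "j \<in> {1..p-1}"
  shows "coefs_eq p (delta_coefs (basis_d j)) (coefs_bracket p inner_coefs (basis_d j))"
proof (rule coefs_eqI)
  show "coef_a (delta_coefs (basis_d j)) = coef_a (coefs_bracket p inner_coefs (basis_d j))"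
    using delta_rel_a_d[OF j] by simp
  show "coef_\<alpha> (delta_coefs (basis_d j)) = coef_\<alpha> (coefs_bracket p inner_coefs (basis_d j))"
    using delta_rel_d_b_diag[OF j] j by simp
  show "coef_b (delta_coefs (basis_d j)) k = coef_b (coefs_bracket p inner_coefs (basis_d j)) k"
    if "k \<in> {1..p-1}" for k
    using delta_rel_a_d[OF j] that by simp
  show "coef_d (delta_coefs (basis_d j)) k = coef_d (coefs_bracket p inner_coefs (basis_d j)) k"
    if "k \<in> {1..p-1}" for k
    using delta_rel_d_e[OF j] delta_rel_b_d[OF that j] by (cases "k = j") simp_all
  show "coef_e (delta_coefs (basis_d j)) k = coef_e (coefs_bracket p inner_coefs (basis_d j)) k"
    if "k \<in> {1..p-1}" for k
    using delta_rel_a_d[OF j] that by simp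
qed

lemma delta_coefs_eq_bracket: "coefs_eq p (delta_coefs C) (coefs_bracket p inner_coefs C)"
proof -
  let ?E = "basis_expansion p C"
  have "delta_coefs C = delta_coefs ?E"
    by (rule delta_coefs_cong[OF coefs_eq_basis_expansion])
  moreover have "coefs_eq p (delta_coefs ?E) (coefs_bracket p inner_coefs ?E)"
    unfolding basis_expansion_def delta_coefs_add delta_coefs_scale delta_coefs_sum[OF finite_atLeastAtMost]
      coefs_bracket_add_right coefs_bracket_scale_right coefs_bracket_sum_right[OF finite_atLeastAtMost]
    by (intro coefs_add_cong coefs_scale_cong coefs_sum_cong delta_basis_a delta_basis_\<alpha> delta_basis_b
        delta_basis_d delta_basis_e) auto
  moreover have "coefs_eq p (coefs_bracket p inner_coefs ?E) (coefs_bracket p inner_coefs C)"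
    by (rule coefs_bracket_cong[OF coefs_eq_refl coefs_eq_sym[OF coefs_eq_basis_expansion]])
  ultimately show ?thesis
    using coefs_eq_trans by metis
qed

theorem derivation_is_inner: "\<Delta> = inner_derivation (DerF p \<phi>) comm_bracket (der_of p \<phi> inner_coefs)"
proof
  fix X
  show "\<Delta> X = inner_derivation (DerF p \<phi>) comm_bracket (der_of p \<phi> inner_coefs) X"
  proof (cases "X \<in> DerF p \<phi>")
    case True
    then have X: "X = der_of p \<phi> (coefs_of X)"
      by (rule DerF_eq_der_of_coefs[OF _ one_le_p generic])
    then have "\<Delta> X = der_of p \<phi> (delta_coefs (coefs_of X))"
      using Delta_der_of by metis
    also have "\<dots> = comm_bracket (der_of p \<phi> inner_coefs) X"
      using bracket_as_der_of[OF coefs_eq_sym[OF delta_coefs_eq_bracket]] X by metis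
    finally show ?thesis
      using True by (simp add: inner_derivation_def)
  next
    case False
    then show ?thesis
      using derivation by (simp add: inner_derivation_def derivations_def)
  qed
qed

end

theorem theorem2:
  fixes p :: nat and \<phi> \<phi>' :: "nat \<Rightarrow> complex"
  assumes "p \<ge> 2"
    and "\<not> in_Omega1 p \<phi>"
    and "\<not> in_Omega1 p \<phi>'"
  shows "has_derived_length (DerF p \<phi>) comm_bracket (fun_sc vsc) 3
       \<and> complete_lie (DerF p \<phi>) comm_bracket (fun_sc vsc)
       \<and> lie_isomorphic (DerF p \<phi>) comm_bracket (fun_sc vsc)
                        (DerF p \<phi>') comm_bracket (fun_sc vsc)"
proof -
  interpret generic_F p \<phi>
    using assms(1,2) by unfold_locales
  have "complete_lie (DerF p \<phi>) comm_bracket (fun_sc vsc)"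
    unfolding complete_lie_def
  proof (intro conjI ballI)
    show "lie_center (DerF p \<phi>) comm_bracket = {0}"
      by (rule DerF_center_trivial[OF one_le_p generic])
    fix d assume "d \<in> derivations (DerF p \<phi>) comm_bracket (fun_sc vsc)"
    then interpret derivation_of_DerF p \<phi> d
      by unfold_locales
    show "\<exists>a\<in>DerF p \<phi>. d = inner_derivation (DerF p \<phi>) comm_bracket a"
      using derivation_is_inner der_of_in by blast
  qed
  then show ?thesis
    using DerF_derived_length DerF_isomorphic[OF one_le_p assms(2,3)] by blast
qed

end
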